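(* Let $\sigma,\tau\in G_n=\mathrm{Aut}_{K\text{-alg}}(\mathbb{S}_n)$. Then the following are equivalent: (1) $\sigma=\tau$; (2) $\sigma(x_i)=\tau(x_i)$ for all $i=1,\dots,n$; (3) $\sigma(y_i)=\tau(y_i)$ for all $i=1,\dots,n$.
   Context: $K$ is a field of characteristic zero and $n\ge1$. $\mathbb{S}_n$ is the $K$-algebra generated by $x_1,\dots,x_n,y_1,\dots,y_n$ subject to the defining relations $y_1x_1=\cdots=y_nx_n=1$ and $[x_i,y_j]=[x_i,x_j]=[y_i,y_j]=0$ for all $i\ne j$. *)

theory Defs
  imports Main
begin

text \<open>The Jacobson algebra S_n, defined literally by its presentation:
  the free associative K-algebra on letters x_1..x_n, y_1..y_n (noncommutative
  polynomials = finitely supported functions on words), modulo the two-sided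
  ideal generated by y_i x_i - 1 and the commutators [x_i,y_j], [x_i,x_j], [y_i,y_j]
  for i different from j.\<close>

datatype gen = Xg nat | Yg nat

type_synonym 'k ncpoly = "gen list \<Rightarrow> 'k"

definition gens :: "nat \<Rightarrow> gen set" where
  "gens n = {Xg i | i. i \<in> {1..n}} \<union> {Yg i | i. i \<in> {1..n}}"

definition ncP :: "nat \<Rightarrow> ('k::field) ncpoly set" where
  "ncP n = {f. finite {w. f w \<noteq> 0} \<and> (\<forall>w. f w \<noteq> 0 \<longrightarrow> set w \<subseteq> gens n)}"

definition nc_add :: "('k::field) ncpoly \<Rightarrow> 'k ncpoly \<Rightarrow> 'k ncpoly" where
  "nc_add f g = (\<lambda>w. f w + g w)"

definition nc_smult :: "'k::field \<Rightarrow> 'k ncpoly \<Rightarrow> 'k ncpoly" where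
  "nc_smult c f = (\<lambda>w. c * f w)"

definition nc_sub :: "('k::field) ncpoly \<Rightarrow> 'k ncpoly \<Rightarrow> 'k ncpoly" where
  "nc_sub f g = (\<lambda>w. f w - g w)"

definition nc_mult :: "('k::field) ncpoly \<Rightarrow> 'k ncpoly \<Rightarrow> 'k ncpoly" where
  "nc_mult f g = (\<lambda>w. \<Sum>(u, v)\<in>{(u, v). u @ v = w}. f u * g v)"

definition nc_mon :: "gen list \<Rightarrow> ('k::field) ncpoly" where
  "nc_mon w = (\<lambda>v. if v = w then 1 else 0)"

definition nc_comm :: "('k::field) ncpoly \<Rightarrow> 'k ncpoly \<Rightarrow> 'k ncpoly" where
  "nc_comm f g = nc_sub (nc_mult f g) (nc_mult g f)"

inductive_set relI :: "nat \<Rightarrow> ('k::field) ncpoly set" for n where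
  rel_yx: "i \<in> {1..n} \<Longrightarrow> nc_sub (nc_mult (nc_mon [Yg i]) (nc_mon [Xg i])) (nc_mon []) \<in> relI n"
| rel_xy: "i \<in> {1..n} \<Longrightarrow> j \<in> {1..n} \<Longrightarrow> i \<noteq> j \<Longrightarrow> nc_comm (nc_mon [Xg i]) (nc_mon [Yg j]) \<in> relI n"
| rel_xx: "i \<in> {1..n} \<Longrightarrow> j \<in> {1..n} \<Longrightarrow> i \<noteq> j \<Longrightarrow> nc_comm (nc_mon [Xg i]) (nc_mon [Xg j]) \<in> relI n"
| rel_yy: "i \<in> {1..n} \<Longrightarrow> j \<in> {1..n} \<Longrightarrow> i \<noteq> j \<Longrightarrow> nc_comm (nc_mon [Yg i]) (nc_mon [Yg j]) \<in> relI n"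
| rel_zero: "(\<lambda>w. 0) \<in> relI n"
| rel_add: "f \<in> relI n \<Longrightarrow> g \<in> relI n \<Longrightarrow> nc_add f g \<in> relI n"
| rel_smult: "f \<in> relI n \<Longrightarrow> nc_smult c f \<in> relI n"
| rel_lmult: "f \<in> relI n \<Longrightarrow> p \<in> ncP n \<Longrightarrow> nc_mult p f \<in> relI n"
| rel_rmult: "f \<in> relI n \<Longrightarrow> p \<in> ncP n \<Longrightarrow> nc_mult f p \<in> relI n"

definition Srel :: "nat \<Rightarrow> (('k::field) ncpoly \<times> 'k ncpoly) set" where
  "Srel n = {(f, g). f \<in> ncP n \<and> g \<in> ncP n \<and> nc_sub f g \<in> relI n}"

definition Sn :: "nat \<Rightarrow> ('k::field) ncpoly set set" where
  "Sn n = ncP n // Srel n"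

definition Sn_class :: "nat \<Rightarrow> ('k::field) ncpoly \<Rightarrow> 'k ncpoly set" where
  "Sn_class n f = Srel n `` {f}"

definition Sn_add :: "nat \<Rightarrow> ('k::field) ncpoly set \<Rightarrow> 'k ncpoly set \<Rightarrow> 'k ncpoly set" where
  "Sn_add n A B = Sn_class n (nc_add (SOME a. a \<in> A) (SOME b. b \<in> B))"

definition Sn_mult :: "nat \<Rightarrow> ('k::field) ncpoly set \<Rightarrow> 'k ncpoly set \<Rightarrow> 'k ncpoly set" where
  "Sn_mult n A B = Sn_class n (nc_mult (SOME a. a \<in> A) (SOME b. b \<in> B))"

definition Sn_smult :: "nat \<Rightarrow> 'k::field \<Rightarrow> 'k ncpoly set \<Rightarrow> 'k ncpoly set" where
  "Sn_smult n c A = Sn_class n (nc_smult c (SOME a. a \<in> A))"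

definition Sn_one :: "nat \<Rightarrow> ('k::field) ncpoly set" where
  "Sn_one n = Sn_class n (nc_mon [])"

definition Sn_x :: "nat \<Rightarrow> nat \<Rightarrow> ('k::field) ncpoly set" where
  "Sn_x n i = Sn_class n (nc_mon [Xg i])"

definition Sn_y :: "nat \<Rightarrow> nat \<Rightarrow> ('k::field) ncpoly set" where
  "Sn_y n i = Sn_class n (nc_mon [Yg i])"

definition Sn_aut :: "nat \<Rightarrow> (('k::field) ncpoly set \<Rightarrow> 'k ncpoly set) \<Rightarrow> bool" where
  "Sn_aut n \<sigma> \<longleftrightarrow>
     bij_betw \<sigma> (Sn n) (Sn n) \<and>
     (\<forall>A\<in>Sn n. \<forall>B\<in>Sn n. \<sigma> (Sn_add n A B) = Sn_add n (\<sigma> A) (\<sigma> B)) \<and>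
     (\<forall>A\<in>Sn n. \<forall>B\<in>Sn n. \<sigma> (Sn_mult n A B) = Sn_mult n (\<sigma> A) (\<sigma> B)) \<and>
     (\<forall>c. \<forall>A\<in>Sn n. \<sigma> (Sn_smult n c A) = Sn_smult n c (\<sigma> A)) \<and>
     \<sigma> (Sn_one n) = Sn_one n"

end

theory Submission
  imports Defs "HOL-Library.Fun_Lexorder"
begin

(* S_n is given by generators and relations, so we first realise it faithfully: S_n acts on
   functions v : N^n -> K (the Fock module), x_i lowering and y_i raising the i-th coordinate
   of the index.  Every word is congruent to a normal form x^alpha y^beta, and the
   normal-form operators are linearly independent, so the action is faithful; S_n is thereby
   identified with the operator algebra it generates, and each automorphism of S_n becomes an
   automorphism of that algebra.

   Let rho be an automorphism fixing every x_i, whose inverse also fixes them.  The vacuum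
   projector E = prod_i (1 - x_i y_i) satisfies E x_i = 0, hence so does rho(E), which forces
   rho(E) = p(x) E for a polynomial p in the x's; likewise the inverse sends E to q(x) E, and
   E = q(x) p(x) E makes p a unit of K[x_1..x_n] (a leading-term argument), i.e. a constant,
   which idempotency of E forces to be 1.  Then rho(y_j) x^alpha E = rho(y_j x^alpha E) =
   y_j x^alpha E for every alpha, and since x^alpha E maps delta_0 to delta_alpha while
   elements of the algebra are determined by their values on the delta_alpha, rho(y_j) = y_j.
   Fixed y_i is the mirror image, with E y^beta and y_i E = 0.  Two automorphisms agreeing on
   the x_i (or on the y_i) differ by such a rho, and an automorphism fixing all generators is
   the identity, which gives the theorem. *)

section \<open>Noncommutative polynomials and the ideal of relations\<close>

lemma finite_splits: "finite {(u, v). u @ v = (w::'a list)}"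
proof -
  have "{(u, v). u @ v = w} \<subseteq> (\<lambda>k. (take k w, drop k w)) ` {..length w}"
  proof
    fix p assume "p \<in> {(u, v). u @ v = w}"
    then obtain u v where p: "p = (u,v)" "u @ v = w" by auto
    then show "p \<in> (\<lambda>k. (take k w, drop k w)) ` {..length w}"
      by (intro image_eqI[of _ _ "length u"]) auto
  qed
  then show ?thesis by (rule finite_subset) auto
qed

lemma nc_mult_mon: "nc_mult (nc_mon u) (nc_mon v) = (nc_mon (u @ v) :: ('k::field) ncpoly)"
proof
  fix w
  have "nc_mult (nc_mon u) (nc_mon v) w =
     (\<Sum>p\<in>{(a, b). a @ b = w}. if p = (u,v) then 1 else (0::'k))"
    unfolding nc_mult_def nc_mon_def by (intro sum.cong) (auto split: if_splits)
  also have "\<dots> = (if u @ v = w then 1 else 0)"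
    using finite_splits[of w] by (simp add: sum.delta')
  finally show "nc_mult (nc_mon u) (nc_mon v) w = (nc_mon (u @ v) :: 'k ncpoly) w"
    by (auto simp: nc_mon_def)
qed

lemma ncP_mon: "set w \<subseteq> gens n \<Longrightarrow> (nc_mon w :: ('k::field) ncpoly) \<in> ncP n"
  unfolding ncP_def nc_mon_def by auto

lemma ncP_zero: "(\<lambda>w. 0) \<in> ncP n"
  unfolding ncP_def by auto

lemma ncP_add: "f \<in> ncP n \<Longrightarrow> g \<in> ncP n \<Longrightarrow> nc_add f g \<in> ncP n"
  unfolding ncP_def nc_add_def
  apply (auto intro: finite_subset[of _ "{w. f w \<noteq> 0} \<union> {w. g w \<noteq> 0}"])
  by (metis add.left_neutral subsetD)

lemma ncP_sub: "f \<in> ncP n \<Longrightarrow> g \<in> ncP n \<Longrightarrow> nc_sub f g \<in> ncP n"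
  unfolding ncP_def nc_sub_def
  apply (auto intro: finite_subset[of _ "{w. f w \<noteq> 0} \<union> {w. g w \<noteq> 0}"])
  by (metis subsetD)

lemma ncP_smult: "f \<in> ncP n \<Longrightarrow> nc_smult c f \<in> ncP n"
  unfolding ncP_def nc_smult_def
  by (auto intro: finite_subset[of _ "{w. f w \<noteq> 0}"])

lemma nc_mult_nz:
  assumes "nc_mult f g w \<noteq> 0"
  shows "\<exists>u v. u @ v = w \<and> f u \<noteq> 0 \<and> g v \<noteq> 0"
proof (rule ccontr)
  assume "\<not> ?thesis"
  then have "\<And>p. p \<in> {(u, v). u @ v = w} \<Longrightarrow> (case p of (u,v) \<Rightarrow> f u * g v) = 0" by auto
  then have "nc_mult f g w = 0" unfolding nc_mult_def by (intro sum.neutral) auto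
  with assms show False by simp
qed

lemma ncP_mult: "f \<in> ncP n \<Longrightarrow> g \<in> ncP n \<Longrightarrow> nc_mult f g \<in> ncP n"
proof -
  assume f: "f \<in> ncP n" and g: "g \<in> ncP n"
  have "{w. nc_mult f g w \<noteq> 0} \<subseteq> (\<lambda>(u,v). u @ v) ` ({u. f u \<noteq> 0} \<times> {v. g v \<noteq> 0})"
    by (auto dest!: nc_mult_nz)
  moreover have "finite ((\<lambda>(u,v). u @ v) ` ({u. f u \<noteq> 0} \<times> {v. g v \<noteq> 0}))"
    using f g unfolding ncP_def by auto
  ultimately have "finite {w. nc_mult f g w \<noteq> 0}" by (rule finite_subset)
  moreover have "set w \<subseteq> gens n" if "nc_mult f g w \<noteq> 0" for w
    using nc_mult_nz[OF that] f g unfolding ncP_def by fastforce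
  ultimately show ?thesis unfolding ncP_def by auto
qed

lemma nc_mult_sub_left: "nc_mult (nc_sub f g) h = nc_sub (nc_mult f h) (nc_mult g h)"
  unfolding nc_mult_def nc_sub_def
  by (auto simp: sum_subtractf[symmetric] algebra_simps intro!: sum.cong)

lemma nc_mult_sub_right: "nc_mult h (nc_sub f g) = nc_sub (nc_mult h f) (nc_mult h g)"
  unfolding nc_mult_def nc_sub_def
  by (auto simp: sum_subtractf[symmetric] algebra_simps intro!: sum.cong)

lemma relI_ncP: "f \<in> relI n \<Longrightarrow> f \<in> ncP n"
proof (induction rule: relI.induct)
  case (rel_yx i) then show ?case
    by (intro ncP_sub ncP_mult ncP_mon) (auto simp: gens_def)
next
  case (rel_xy i j) then show ?case unfolding nc_comm_def
    by (intro ncP_sub ncP_mult ncP_mon) (auto simp: gens_def)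
next
  case (rel_xx i j) then show ?case unfolding nc_comm_def
    by (intro ncP_sub ncP_mult ncP_mon) (auto simp: gens_def)
next
  case (rel_yy i j) then show ?case unfolding nc_comm_def
    by (intro ncP_sub ncP_mult ncP_mon) (auto simp: gens_def)
qed (auto intro: ncP_zero ncP_add ncP_smult ncP_mult)

lemma relI_sum:
  assumes "finite S" "\<And>s. s \<in> S \<Longrightarrow> F s \<in> relI n"
  shows "(\<lambda>x. \<Sum>s\<in>S. F s x) \<in> relI n"
  using assms
proof (induction S rule: finite_induct)
  case empty then show ?case by (simp add: relI.rel_zero)
next
  case (insert a S)
  have "(\<lambda>x. \<Sum>s\<in>insert a S. F s x) = nc_add (F a) (\<lambda>x. \<Sum>s\<in>S. F s x)"
    using insert by (auto simp: nc_add_def)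
  then show ?case using insert by (auto intro: relI.rel_add)
qed

lemma relI_sub_self: "nc_sub f f \<in> relI n"
proof -
  have "nc_sub f f = (\<lambda>w. 0)" by (auto simp: nc_sub_def)
  then show ?thesis by (simp add: relI.rel_zero)
qed

lemma relI_sub_sym: "nc_sub f g \<in> relI n \<Longrightarrow> nc_sub g f \<in> relI n"
proof -
  assume "nc_sub f g \<in> relI n"
  then have "nc_smult (-1) (nc_sub f g) \<in> relI n" by (rule relI.rel_smult)
  moreover have "nc_smult (-1) (nc_sub f g) = nc_sub g f" by (auto simp: nc_smult_def nc_sub_def)
  ultimately show ?thesis by simp
qed

lemma relI_sub_trans: "nc_sub f g \<in> relI n \<Longrightarrow> nc_sub g h \<in> relI n \<Longrightarrow> nc_sub f h \<in> relI n"
proof -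
  assume "nc_sub f g \<in> relI n" "nc_sub g h \<in> relI n"
  then have "nc_add (nc_sub f g) (nc_sub g h) \<in> relI n" by (rule relI.rel_add)
  moreover have "nc_add (nc_sub f g) (nc_sub g h) = nc_sub f h" by (auto simp: nc_add_def nc_sub_def)
  ultimately show ?thesis by simp
qed

lemma equiv_Srel: "equiv (ncP n) (Srel n)"
  unfolding equiv_def refl_on_def sym_def trans_def Srel_def
  by (auto intro: relI_sub_self relI_sub_sym relI_sub_trans)

section \<open>The Fock representation\<close>

text \<open>Vectors are functions on multi-indices; only \<open>admissible\<close> multi-indices (supported
  in \<open>{1..n}\<close>) carry the representation, all operators vanish off them.\<close>

type_synonym 'k vec = "(nat \<Rightarrow> nat) \<Rightarrow> 'k"
type_synonym 'k op = "'k vec \<Rightarrow> 'k vec"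

definition adm :: "nat \<Rightarrow> (nat \<Rightarrow> nat) \<Rightarrow> bool" where
  "adm n \<gamma> \<longleftrightarrow> (\<forall>i. i \<notin> {1..n} \<longrightarrow> \<gamma> i = 0)"

text \<open>Note \<open>y\<^sub>i x\<^sub>i = 1\<close> but \<open>x\<^sub>i y\<^sub>i \<noteq> 1\<close>.\<close>

definition Xop :: "nat \<Rightarrow> nat \<Rightarrow> ('k::field) op" where
  "Xop n i v = (\<lambda>\<gamma>. if adm n \<gamma> \<and> 0 < \<gamma> i then v (\<gamma>(i := \<gamma> i - 1)) else 0)"
definition Yop :: "nat \<Rightarrow> nat \<Rightarrow> ('k::field) op" where
  "Yop n i v = (\<lambda>\<gamma>. if adm n \<gamma> then v (\<gamma>(i := Suc (\<gamma> i))) else 0)"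
definition Rop :: "nat \<Rightarrow> ('k::field) op" where
  "Rop n v = (\<lambda>\<gamma>. if adm n \<gamma> then v \<gamma> else 0)"

fun gop :: "nat \<Rightarrow> gen \<Rightarrow> ('k::field) op" where
  "gop n (Xg i) = Xop n i"
| "gop n (Yg i) = Yop n i"

fun wop :: "nat \<Rightarrow> gen list \<Rightarrow> ('k::field) op" where
  "wop n [] = Rop n"
| "wop n (g # w) = gop n g \<circ> wop n w"

definition rep_poly :: "nat \<Rightarrow> ('k::field) ncpoly \<Rightarrow> 'k op" where
  "rep_poly n f = (\<lambda>v \<gamma>. \<Sum>w\<in>{w. f w \<noteq> 0}. f w * wop n w v \<gamma>)"

lemma adm_upd [simp]: "i \<in> {1..n} \<Longrightarrow> adm n (\<gamma>(i := k)) = adm n \<gamma>"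
  unfolding adm_def by auto

lemma gens_X [simp]: "Xg i \<in> gens n \<longleftrightarrow> i \<in> {1..n}"
  and gens_Y [simp]: "Yg i \<in> gens n \<longleftrightarrow> i \<in> {1..n}"
  unfolding gens_def by auto

text \<open>Every word acts as a ``partial substitution'' of the index, hence linearly.\<close>

lemma wop_form: "\<exists>C \<phi>. \<forall>v \<gamma>. wop n w v \<gamma> = (if C \<gamma> then v (\<phi> \<gamma>) else (0::'k::field))"
proof (induction w)
  case Nil show ?case by (rule exI[of _ "adm n"], rule exI[of _ id]) (simp add: Rop_def)
next
  case (Cons g w)
  then obtain C \<phi> where h: "\<And>v \<gamma>. wop n w v \<gamma> = (if C \<gamma> then v (\<phi> \<gamma>) else (0::'k))" by blast
  show ?case
  proof (cases g)
    case (Xg i)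
    show ?thesis
      by (rule exI[of _ "\<lambda>\<gamma>. adm n \<gamma> \<and> 0 < \<gamma> i \<and> C (\<gamma>(i := \<gamma> i - 1))"],
          rule exI[of _ "\<lambda>\<gamma>. \<phi> (\<gamma>(i := \<gamma> i - 1))"]) (simp add: Xg h Xop_def)
  next
    case (Yg i)
    show ?thesis
      by (rule exI[of _ "\<lambda>\<gamma>. adm n \<gamma> \<and> C (\<gamma>(i := Suc (\<gamma> i)))"],
          rule exI[of _ "\<lambda>\<gamma>. \<phi> (\<gamma>(i := Suc (\<gamma> i)))"]) (simp add: Yg h Yop_def)
  qed
qed

lemma wop_lin:
  "wop n w (\<lambda>\<gamma>. \<Sum>b\<in>B. c b * u b \<gamma>) \<gamma>' = (\<Sum>b\<in>B. (c b :: 'k::field) * wop n w (u b) \<gamma>')"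
proof -
  obtain C \<phi> where h: "\<And>v \<gamma>. wop n w v \<gamma> = (if C \<gamma> then v (\<phi> \<gamma>) else (0::'k))"
    using wop_form by blast
  show ?thesis by (simp add: h)
qed

lemma wop_zero: "wop n w (\<lambda>\<gamma>. 0) \<gamma>' = (0::'k::field)"
proof -
  obtain C \<phi> where h: "\<And>v \<gamma>. wop n w v \<gamma> = (if C \<gamma> then v (\<phi> \<gamma>) else (0::'k))"
    using wop_form by blast
  show ?thesis by (simp add: h)
qed

lemma wop_nadm: "\<not> adm n \<gamma> \<Longrightarrow> wop n w v \<gamma> = 0"
proof (induction w arbitrary: \<gamma>)
  case Nil then show ?case by (simp add: Rop_def)
next
  case (Cons a w) then show ?case by (cases a) (auto simp: Xop_def Yop_def)
qed

lemma Rop_wop: "Rop n (wop n w v) = wop n w v"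
  by (auto simp: Rop_def wop_nadm)

lemma wop_append: "wop n (u @ w) v = wop n u (wop n w v)"
  by (induction u arbitrary: v) (auto simp: Rop_wop)

lemma rep_poly_superset:
  assumes "finite T" "{w. f w \<noteq> 0} \<subseteq> T"
  shows "rep_poly n f v \<gamma> = (\<Sum>w\<in>T. f w * wop n w v \<gamma>)"
  unfolding rep_poly_def using assms by (intro sum.mono_neutral_left) auto

lemma ncP_fin: "f \<in> ncP n \<Longrightarrow> finite {w. f w \<noteq> 0}"
  unfolding ncP_def by auto

lemma rep_poly_add:
  assumes "f \<in> ncP n" "g \<in> ncP n"
  shows "rep_poly n (nc_add f g) v \<gamma> = rep_poly n f v \<gamma> + rep_poly n g v \<gamma>"
proof -
  let ?T = "{w. f w \<noteq> 0} \<union> {w. g w \<noteq> 0}"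
  have T: "finite ?T" using assms by (auto dest: ncP_fin)
  show ?thesis
    by (subst (1 2 3) rep_poly_superset[OF T])
       (auto simp: nc_add_def sum.distrib algebra_simps)
qed

lemma rep_poly_sub:
  assumes "f \<in> ncP n" "g \<in> ncP n"
  shows "rep_poly n (nc_sub f g) v \<gamma> = rep_poly n f v \<gamma> - rep_poly n g v \<gamma>"
proof -
  let ?T = "{w. f w \<noteq> 0} \<union> {w. g w \<noteq> 0}"
  have T: "finite ?T" using assms by (auto dest: ncP_fin)
  show ?thesis
    by (subst (1 2 3) rep_poly_superset[OF T])
       (auto simp: nc_sub_def sum_subtractf[symmetric] algebra_simps)
qed

lemma rep_poly_smult:
  assumes "f \<in> ncP n"
  shows "rep_poly n (nc_smult c f) v \<gamma> = c * rep_poly n f v \<gamma>"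
proof -
  let ?T = "{w. f w \<noteq> 0}"
  have T: "finite ?T" using assms by (auto dest: ncP_fin)
  show ?thesis
    by (subst (1 2) rep_poly_superset[OF T])
       (auto simp: nc_smult_def sum_distrib_left algebra_simps)
qed

lemma rep_poly_zero: "rep_poly n (\<lambda>w. 0) v \<gamma> = 0"
  unfolding rep_poly_def by simp

lemma rep_poly_mon: "rep_poly n (nc_mon w) = wop n w"
proof (intro ext)
  fix v \<gamma>
  have "rep_poly n (nc_mon w) v \<gamma> = (\<Sum>u\<in>{w}. nc_mon w u * wop n u v \<gamma>)"
    by (rule rep_poly_superset) (auto simp: nc_mon_def)
  then show "rep_poly n (nc_mon w) v \<gamma> = wop n w v \<gamma>" by (simp add: nc_mon_def)
qed

lemma rep_poly_lin:
  assumes "f \<in> ncP n"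
  shows "rep_poly n f (\<lambda>\<gamma>. \<Sum>b\<in>B. c b * u b \<gamma>) \<gamma>' = (\<Sum>b\<in>B. c b * rep_poly n f (u b) \<gamma>')"
  unfolding rep_poly_def by (simp add: wop_lin sum_distrib_left algebra_simps sum.swap[of _ B])

lemma rep_poly_zero_vec: "rep_poly n f (\<lambda>\<gamma>. 0) \<gamma>' = 0"
  unfolding rep_poly_def by (simp add: wop_zero)

lemma rep_poly_mult:
  assumes f: "f \<in> ncP n" and g: "g \<in> ncP n"
  shows "rep_poly n (nc_mult f g) v \<gamma> = rep_poly n f (rep_poly n g v) \<gamma>"
proof -
  let ?Sf = "{w. f w \<noteq> 0}" and ?Sg = "{w. g w \<noteq> 0}"
  have Sf: "finite ?Sf" and Sg: "finite ?Sg" using f g by (auto dest: ncP_fin)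
  let ?cat = "\<lambda>p. fst p @ snd p"
  let ?T = "?cat ` (?Sf \<times> ?Sg)"
  have T: "finite ?T" using Sf Sg by auto
  have sub: "{w. nc_mult f g w \<noteq> 0} \<subseteq> ?T"
    by (auto dest!: nc_mult_nz) (metis (mono_tags, lifting) SigmaI fst_conv image_eqI mem_Collect_eq snd_conv)
  have inner: "nc_mult f g w = (\<Sum>p\<in>{p \<in> ?Sf \<times> ?Sg. ?cat p = w}. f (fst p) * g (snd p))" for w
  proof -
    have "nc_mult f g w = (\<Sum>p\<in>{(u, v). u @ v = w}. f (fst p) * g (snd p))"
      unfolding nc_mult_def by (intro sum.cong) auto
    also have "\<dots> = (\<Sum>p\<in>{p \<in> ?Sf \<times> ?Sg. ?cat p = w}. f (fst p) * g (snd p))"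
      using finite_splits[of w] by (intro sum.mono_neutral_right) auto
    finally show ?thesis .
  qed
  have "rep_poly n (nc_mult f g) v \<gamma> = (\<Sum>w\<in>?T. nc_mult f g w * wop n w v \<gamma>)"
    by (rule rep_poly_superset[OF T sub])
  also have "\<dots> = (\<Sum>w\<in>?T. \<Sum>p\<in>{p \<in> ?Sf \<times> ?Sg. ?cat p = w}. f (fst p) * g (snd p) * wop n (?cat p) v \<gamma>)"
    by (simp add: inner sum_distrib_right)
  also have "\<dots> = (\<Sum>p\<in>?Sf \<times> ?Sg. f (fst p) * g (snd p) * wop n (?cat p) v \<gamma>)"
    using Sf Sg by (subst sum.image_gen[of "?Sf \<times> ?Sg" _ ?cat]) auto
  also have "\<dots> = (\<Sum>a\<in>?Sf. \<Sum>b\<in>?Sg. f a * g b * wop n (a @ b) v \<gamma>)"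
    by (simp add: sum.cartesian_product case_prod_beta)
  also have "\<dots> = rep_poly n f (rep_poly n g v) \<gamma>"
    unfolding rep_poly_def by (simp add: wop_lin wop_append sum_distrib_left algebra_simps)
  finally show ?thesis .
qed

text \<open>The defining relations act as zero: the action factors through \<open>S\<^sub>n\<close>.\<close>

lemma rep_poly_relI: "f \<in> relI n \<Longrightarrow> rep_poly n f v \<gamma> = 0"
proof (induction f arbitrary: v \<gamma> rule: relI.induct)
  case (rel_yx i)
  have m: "nc_mon [Yg i] \<in> ncP n" "nc_mon [Xg i] \<in> ncP n" "nc_mon [] \<in> ncP n" "nc_mon [Yg i, Xg i] \<in> ncP n"
    using rel_yx by (auto intro!: ncP_mon)
  show ?case using rel_yx
    by (simp add: rep_poly_sub ncP_mult m nc_mult_mon rep_poly_mon Xop_def Yop_def Rop_def)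
next
  case (rel_xy i j)
  have m: "nc_mon [Yg j] \<in> ncP n" "nc_mon [Xg i] \<in> ncP n" "nc_mon [Xg i, Yg j] \<in> ncP n" "nc_mon [Yg j, Xg i] \<in> ncP n"
    using rel_xy by (auto intro!: ncP_mon)
  show ?case using rel_xy unfolding nc_comm_def
    by (simp add: rep_poly_sub ncP_mult m nc_mult_mon rep_poly_mon Xop_def Yop_def Rop_def fun_upd_twist)
next
  case (rel_xx i j)
  have m: "nc_mon [Xg j] \<in> ncP n" "nc_mon [Xg i] \<in> ncP n" "nc_mon [Xg i, Xg j] \<in> ncP n" "nc_mon [Xg j, Xg i] \<in> ncP n"
    using rel_xx by (auto intro!: ncP_mon)
  show ?case using rel_xx unfolding nc_comm_def
    by (simp add: rep_poly_sub ncP_mult m nc_mult_mon rep_poly_mon Xop_def Yop_def Rop_def fun_upd_twist)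
next
  case (rel_yy i j)
  have m: "nc_mon [Yg j] \<in> ncP n" "nc_mon [Yg i] \<in> ncP n" "nc_mon [Yg i, Yg j] \<in> ncP n" "nc_mon [Yg j, Yg i] \<in> ncP n"
    using rel_yy by (auto intro!: ncP_mon)
  show ?case using rel_yy unfolding nc_comm_def
    by (simp add: rep_poly_sub ncP_mult m nc_mult_mon rep_poly_mon Xop_def Yop_def Rop_def fun_upd_twist)
next
  case rel_zero then show ?case by (simp add: rep_poly_zero)
next
  case (rel_add f g) then show ?case by (simp add: rep_poly_add relI_ncP)
next
  case (rel_smult f c) then show ?case by (simp add: rep_poly_smult relI_ncP)
next
  case (rel_lmult f p)
  have "rep_poly n (nc_mult p f) v \<gamma> = rep_poly n p (rep_poly n f v) \<gamma>"
    using rel_lmult by (simp add: rep_poly_mult relI_ncP)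
  also have "rep_poly n f v = (\<lambda>\<gamma>. 0)" using rel_lmult by auto
  finally show ?case by (simp add: rep_poly_zero_vec)
next
  case (rel_rmult f p)
  then show ?case by (simp add: rep_poly_mult relI_ncP)
qed

section \<open>Normal form of words and faithfulness of the representation\<close>

text \<open>Two words are congruent if their difference lies in the ideal of relations.  The type
  argument only fixes the coefficient field.\<close>

definition wrel :: "nat \<Rightarrow> ('k::field) itself \<Rightarrow> gen list \<Rightarrow> gen list \<Rightarrow> bool" where
  "wrel n T u v \<longleftrightarrow> set u \<subseteq> gens n \<and> set v \<subseteq> gens n \<and>
      nc_sub (nc_mon u) (nc_mon v :: 'k ncpoly) \<in> relI n"

lemma wrel_refl: "set u \<subseteq> gens n \<Longrightarrow> wrel n T u u"
  unfolding wrel_def by (simp add: relI_sub_self)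

lemma wrel_trans [trans]: "wrel n T u v \<Longrightarrow> wrel n T v w \<Longrightarrow> wrel n T u w"
  unfolding wrel_def by (blast intro: relI_sub_trans)

lemma wrel_ctx:
  assumes "wrel n (T::'k::field itself) a b" "set p \<subseteq> gens n" "set q \<subseteq> gens n"
  shows "wrel n T (p @ a @ q) (p @ b @ q)"
proof -
  have r: "nc_sub (nc_mon a) (nc_mon b :: 'k ncpoly) \<in> relI n" and a: "set a \<subseteq> gens n"
    and b: "set b \<subseteq> gens n"
    using assms unfolding wrel_def by auto
  have "nc_mult (nc_mon p) (nc_mult (nc_sub (nc_mon a) (nc_mon b :: 'k ncpoly)) (nc_mon q)) \<in> relI n"
    using assms(2,3) by (intro relI.rel_lmult relI.rel_rmult r ncP_mon)
  moreover have "nc_mult (nc_mon p) (nc_mult (nc_sub (nc_mon a) (nc_mon b :: 'k ncpoly)) (nc_mon q))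
      = nc_sub (nc_mon (p @ a @ q)) (nc_mon (p @ b @ q))"
    by (simp add: nc_mult_sub_left nc_mult_sub_right nc_mult_mon)
  ultimately show ?thesis using a b assms(2,3) unfolding wrel_def by auto
qed

lemma wrel_pre: "wrel n T a b \<Longrightarrow> set p \<subseteq> gens n \<Longrightarrow> wrel n T (p @ a) (p @ b)"
  using wrel_ctx[of n T a b p "[]"] by simp

lemma wrel_post: "wrel n T a b \<Longrightarrow> set q \<subseteq> gens n \<Longrightarrow> wrel n T (a @ q) (b @ q)"
  using wrel_ctx[of n T a b "[]" q] by simp

lemma wrel_cons: "wrel n T a b \<Longrightarrow> g \<in> gens n \<Longrightarrow> wrel n T (g # a) (g # b)"
  using wrel_pre[of n T a b "[g]"] by simp

lemma wrel_yx: "i \<in> {1..n} \<Longrightarrow> wrel n (T::'k::field itself) [Yg i, Xg i] []"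
  unfolding wrel_def using relI.rel_yx[of i n, where 'k='k] by (simp add: nc_mult_mon)

lemma wrel_xx:
  assumes "i \<in> {1..n}" "j \<in> {1..n}"
  shows "wrel n (T::'k::field itself) [Xg i, Xg j] [Xg j, Xg i]"
  using assms relI.rel_xx[of i n j, where 'k='k] unfolding wrel_def nc_comm_def
  by (cases "i = j") (auto simp: nc_mult_mon relI_sub_self)

lemma wrel_yy:
  assumes "i \<in> {1..n}" "j \<in> {1..n}"
  shows "wrel n (T::'k::field itself) [Yg i, Yg j] [Yg j, Yg i]"
  using assms relI.rel_yy[of i n j, where 'k='k] unfolding wrel_def nc_comm_def
  by (cases "i = j") (auto simp: nc_mult_mon relI_sub_self)

lemma wrel_yx_comm:
  assumes "i \<in> {1..n}" "j \<in> {1..n}" "i \<noteq> j"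
  shows "wrel n (T::'k::field itself) [Yg i, Xg j] [Xg j, Yg i]"
  using assms relI.rel_xy[of j n i, where 'k='k] unfolding wrel_def nc_comm_def
  by (auto simp: nc_mult_mon intro: relI_sub_sym)

lemma wrel_rep:
  assumes "wrel n T [g, h] [h, g]"
  shows "wrel n T (g # replicate k h) (replicate k h @ [g])"
proof (induction k)
  case 0
  have "g \<in> gens n" using assms unfolding wrel_def by auto
  then show ?case by (simp add: wrel_refl)
next
  case (Suc k)
  have gh: "g \<in> gens n" "h \<in> gens n" using assms unfolding wrel_def by auto
  have "wrel n T (g # replicate (Suc k) h) ([g, h] @ replicate k h)" by (simp, rule wrel_refl) (auto simp: gh)
  also have "wrel n T \<dots> ([h, g] @ replicate k h)" by (rule wrel_post[OF assms]) (auto simp: gh)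
  also have "[h, g] @ replicate k h = [h] @ (g # replicate k h)" by simp
  also have "wrel n T \<dots> ([h] @ (replicate k h @ [g]))" by (rule wrel_pre[OF Suc]) (auto simp: gh)
  finally show ?case by simp
qed

text \<open>\<open>ord_word C m \<alpha>\<close> is the ordered monomial \<open>C\<^sub>m\<^sup>\<alpha>\<^sup>m \<dots> C\<^sub>1\<^sup>\<alpha>\<^sup>1\<close>; the normal form of a word
  is \<open>x\<^sup>\<alpha> y\<^sup>\<beta>\<close> with both parts ordered.\<close>

fun ord_word :: "(nat \<Rightarrow> gen) \<Rightarrow> nat \<Rightarrow> (nat \<Rightarrow> nat) \<Rightarrow> gen list" where
  "ord_word C 0 \<alpha> = []"
| "ord_word C (Suc m) \<alpha> = replicate (\<alpha> (Suc m)) (C (Suc m)) @ ord_word C m \<alpha>"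

lemma ord_word_set: "m \<le> n \<Longrightarrow> (\<And>i. i \<in> {1..n} \<Longrightarrow> C i \<in> gens n) \<Longrightarrow> set (ord_word C m \<alpha>) \<subseteq> gens n"
  by (induction m) auto

lemma ord_wordX_set [simp]: "m \<le> n \<Longrightarrow> set (ord_word Xg m \<alpha>) \<subseteq> gens n"
  and ord_wordY_set [simp]: "m \<le> n \<Longrightarrow> set (ord_word Yg m \<alpha>) \<subseteq> gens n"
  by (rule ord_word_set; simp)+

lemma ord_word_cong: "(\<And>i. i \<in> {1..m} \<Longrightarrow> \<alpha> i = \<beta> i) \<Longrightarrow> ord_word C m \<alpha> = ord_word C m \<beta>"
  by (induction m) auto

lemma ord_word_zero [simp]: "ord_word C m (\<lambda>_. 0) = []"
  by (induction m) auto

lemma ord_word_step: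
  assumes comm: "\<And>i j. i \<in> {1..n} \<Longrightarrow> j \<in> {1..n} \<Longrightarrow> wrel n T [C i, C j] [C j, C i]"
    and gC: "\<And>i. i \<in> {1..n} \<Longrightarrow> C i \<in> gens n"
  shows "i \<in> {1..m} \<Longrightarrow> m \<le> n \<Longrightarrow> wrel n T (C i # ord_word C m \<alpha>) (ord_word C m (\<alpha>(i := Suc (\<alpha> i))))"
proof (induction m)
  case 0 then show ?case by simp
next
  case (Suc m)
  show ?case
  proof (cases "i = Suc m")
    case True
    have "ord_word C m (\<alpha>(i := Suc (\<alpha> i))) = ord_word C m \<alpha>" using True by (intro ord_word_cong) auto
    then have "C i # ord_word C (Suc m) \<alpha> = ord_word C (Suc m) (\<alpha>(i := Suc (\<alpha> i)))" using True by simp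
    moreover have "set (C i # ord_word C (Suc m) \<alpha>) \<subseteq> gens n" using Suc.prems gC ord_word_set[of "Suc m" n C \<alpha>, OF _ gC] by auto
    ultimately show ?thesis by (metis wrel_refl)
  next
    case False
    let ?k = "\<alpha> (Suc m)"
    have i: "i \<in> {1..m}" using Suc.prems False by auto
    have "wrel n T (C i # ord_word C (Suc m) \<alpha>) ((C i # replicate ?k (C (Suc m))) @ ord_word C m \<alpha>)"
      by simp (rule wrel_refl, use Suc.prems gC ord_word_set[of m n C \<alpha>, OF _ gC] in auto)
    also have "wrel n T \<dots> ((replicate ?k (C (Suc m)) @ [C i]) @ ord_word C m \<alpha>)"
      by (rule wrel_post[OF wrel_rep[OF comm]]) (use Suc.prems gC ord_word_set[of m n C \<alpha>, OF _ gC] in auto)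
    also have "\<dots> = replicate ?k (C (Suc m)) @ (C i # ord_word C m \<alpha>)" by simp
    also have "wrel n T \<dots> (replicate ?k (C (Suc m)) @ ord_word C m (\<alpha>(i := Suc (\<alpha> i))))"
      by (rule wrel_pre[OF Suc.IH]) (use Suc.prems gC i in auto)
    also have "\<dots> = ord_word C (Suc m) (\<alpha>(i := Suc (\<alpha> i)))" using False by simp
    finally show ?thesis .
  qed
qed

text \<open>Moving \<open>y\<^sub>i\<close> through an ordered \<open>x\<close>-monomial: it cancels one \<open>x\<^sub>i\<close> if present
  (\<open>y\<^sub>i x\<^sub>i = 1\<close>), otherwise it commutes past everything.\<close>

lemma wrel_y_past_x:
  assumes "i \<in> {1..n}"
  shows "m \<le> n \<Longrightarrow> wrel n (T::'k::field itself) (Yg i # ord_word Xg m \<alpha>)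
     (if i \<le> m \<and> 0 < \<alpha> i then ord_word Xg m (\<alpha>(i := \<alpha> i - 1)) else ord_word Xg m \<alpha> @ [Yg i])"
proof (induction m)
  case 0 then show ?case using assms by (auto intro: wrel_refl)
next
  case (Suc m)
  let ?k = "\<alpha> (Suc m)"
  show ?case
  proof (cases "i = Suc m")
    case True
    show ?thesis
    proof (cases "0 < ?k")
      case True2: True
      obtain k' where k': "?k = Suc k'" using True2 by (cases ?k) auto
      have "Yg i # ord_word Xg (Suc m) \<alpha> = [Yg i, Xg i] @ (replicate k' (Xg i) @ ord_word Xg m \<alpha>)"
        using True k' by simp
      also have "wrel n T \<dots> ([] @ (replicate k' (Xg i) @ ord_word Xg m \<alpha>))"
        by (rule wrel_post[OF wrel_yx]) (use assms Suc.prems in auto)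
      also have "[] @ (replicate k' (Xg i) @ ord_word Xg m \<alpha>) = ord_word Xg (Suc m) (\<alpha>(i := \<alpha> i - 1))"
        using True k' by (auto intro!: ord_word_cong)
      finally show ?thesis using True True2 by simp
    next
      case False2: False
      have "wrel n T (Yg i # ord_word Xg m \<alpha>) (ord_word Xg m \<alpha> @ [Yg i])"
        using Suc True by simp
      then show ?thesis using True False2 by simp
    qed
  next
    case False
    have "wrel n T (Yg i # ord_word Xg (Suc m) \<alpha>) ((Yg i # replicate ?k (Xg (Suc m))) @ ord_word Xg m \<alpha>)"
      by simp (rule wrel_refl, use Suc.prems assms in \<open>auto\<close>)
    also have "wrel n T \<dots> ((replicate ?k (Xg (Suc m)) @ [Yg i]) @ ord_word Xg m \<alpha>)"
      by (rule wrel_post[OF wrel_rep[OF wrel_yx_comm]]) (use Suc.prems assms False in auto)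
    also have "\<dots> = replicate ?k (Xg (Suc m)) @ (Yg i # ord_word Xg m \<alpha>)" by simp
    also have "wrel n T \<dots> (replicate ?k (Xg (Suc m)) @
        (if i \<le> m \<and> 0 < \<alpha> i then ord_word Xg m (\<alpha>(i := \<alpha> i - 1)) else ord_word Xg m \<alpha> @ [Yg i]))"
      by (rule wrel_pre[OF Suc.IH]) (use Suc.prems in auto)
    also have "\<dots> = (if i \<le> Suc m \<and> 0 < \<alpha> i then ord_word Xg (Suc m) (\<alpha>(i := \<alpha> i - 1)) else ord_word Xg (Suc m) \<alpha> @ [Yg i])"
      using False by auto
    finally show ?thesis .
  qed
qed

lemma word_normal_form:
  "set w \<subseteq> gens n \<Longrightarrow> \<exists>\<alpha> \<beta>. adm n \<alpha> \<and> adm n \<beta> \<and> wrel n (T::'k::field itself) w (ord_word Xg n \<alpha> @ ord_word Yg n \<beta>)"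
proof (induction w)
  case Nil
  have "adm n (\<lambda>_. 0)" by (simp add: adm_def)
  moreover have "wrel n T [] (ord_word Xg n (\<lambda>_. 0) @ ord_word Yg n (\<lambda>_. 0))" by (simp add: wrel_refl)
  ultimately show ?case by blast
next
  case (Cons g w)
  then obtain \<alpha> \<beta> where ab: "adm n \<alpha>" "adm n \<beta>" "wrel n T w (ord_word Xg n \<alpha> @ ord_word Yg n \<beta>)" by auto
  have g: "g \<in> gens n" using Cons by auto
  have 1: "wrel n T (g # w) ((g # ord_word Xg n \<alpha>) @ ord_word Yg n \<beta>)" using wrel_cons[OF ab(3) g] by simp
  show ?case
  proof (cases g)
    case (Xg i)
    have i: "i \<in> {1..n}" using g Xg by simp
    have "wrel n T ((Xg i # ord_word Xg n \<alpha>) @ ord_word Yg n \<beta>) (ord_word Xg n (\<alpha>(i := Suc (\<alpha> i))) @ ord_word Yg n \<beta>)"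
      by (rule wrel_post[OF ord_word_step[OF wrel_xx]]) (use i in auto)
    then have "wrel n T (g # w) (ord_word Xg n (\<alpha>(i := Suc (\<alpha> i))) @ ord_word Yg n \<beta>)"
      using wrel_trans[OF 1] Xg by simp
    moreover have "adm n (\<alpha>(i := Suc (\<alpha> i)))" using ab i by simp
    ultimately show ?thesis using ab by blast
  next
    case (Yg i)
    have i: "i \<in> {1..n}" using g Yg by simp
    have 2: "wrel n T ((Yg i # ord_word Xg n \<alpha>) @ ord_word Yg n \<beta>)
      ((if i \<le> n \<and> 0 < \<alpha> i then ord_word Xg n (\<alpha>(i := \<alpha> i - 1)) else ord_word Xg n \<alpha> @ [Yg i]) @ ord_word Yg n \<beta>)"
      by (rule wrel_post[OF wrel_y_past_x]) (use i in auto)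
    have h1: "wrel n T (g # w) ((Yg i # ord_word Xg n \<alpha>) @ ord_word Yg n \<beta>)" using 1 Yg by simp
    show ?thesis
    proof (cases "0 < \<alpha> i")
      case True
      with 2 have "wrel n T ((Yg i # ord_word Xg n \<alpha>) @ ord_word Yg n \<beta>) (ord_word Xg n (\<alpha>(i := \<alpha> i - 1)) @ ord_word Yg n \<beta>)"
        using i by simp
      then have "wrel n T (g # w) (ord_word Xg n (\<alpha>(i := \<alpha> i - 1)) @ ord_word Yg n \<beta>)"
        by (rule wrel_trans[OF h1])
      moreover have "adm n (\<alpha>(i := \<alpha> i - 1))" using ab i by simp
      ultimately show ?thesis using ab by blast
    next
      case False
      have 3: "wrel n T (ord_word Xg n \<alpha> @ (Yg i # ord_word Yg n \<beta>)) (ord_word Xg n \<alpha> @ ord_word Yg n (\<beta>(i := Suc (\<beta> i))))"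
        by (rule wrel_pre[OF ord_word_step[OF wrel_yy]]) (use i in auto)
      from 2 False have "wrel n T ((Yg i # ord_word Xg n \<alpha>) @ ord_word Yg n \<beta>) (ord_word Xg n \<alpha> @ (Yg i # ord_word Yg n \<beta>))"
        by simp
      then have "wrel n T (g # w) (ord_word Xg n \<alpha> @ (Yg i # ord_word Yg n \<beta>))"
        by (rule wrel_trans[OF h1])
      then have "wrel n T (g # w) (ord_word Xg n \<alpha> @ ord_word Yg n (\<beta>(i := Suc (\<beta> i))))"
        by (rule wrel_trans[OF _ 3])
      moreover have "adm n (\<beta>(i := Suc (\<beta> i)))" using ab i by simp
      ultimately show ?thesis using ab by blast
    qed
  qed
qed

lemma wop_rep_X:
  assumes "i \<in> {1..n}"
  shows "wop n (replicate k (Xg i) @ w) v \<gamma> =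
     (if k \<le> \<gamma> i then wop n w v (\<gamma>(i := \<gamma> i - k)) else (0::'k::field))"
proof (induction k arbitrary: \<gamma>)
  case 0 then show ?case by simp
next
  case (Suc k)
  show ?case
  proof (cases "adm n \<gamma> \<and> 0 < \<gamma> i")
    case True
    have "wop n (replicate (Suc k) (Xg i) @ w) v \<gamma> = wop n (replicate k (Xg i) @ w) v (\<gamma>(i := \<gamma> i - 1))"
      using True by (simp add: Xop_def)
    also have "\<dots> = (if k \<le> (\<gamma>(i := \<gamma> i - 1)) i then wop n w v ((\<gamma>(i := \<gamma> i - 1))(i := (\<gamma>(i := \<gamma> i - 1)) i - k)) else 0)"
      by (rule Suc.IH)
    also have "(\<gamma>(i := \<gamma> i - 1))(i := (\<gamma>(i := \<gamma> i - 1)) i - k) = \<gamma>(i := \<gamma> i - Suc k)" by simp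
    also have "(k \<le> (\<gamma>(i := \<gamma> i - 1)) i) = (Suc k \<le> \<gamma> i)" using True by auto
    finally show ?thesis .
  next
    case False
    show ?thesis
    proof (cases "adm n \<gamma>")
      case True
      then have "\<gamma> i = 0" using False by simp
      then show ?thesis using True by (simp add: Xop_def)
    next
      case F2: False
      then have "\<not> adm n (\<gamma>(i := \<gamma> i - Suc k))" using assms by simp
      then show ?thesis using F2 by (simp add: Xop_def wop_nadm)
    qed
  qed
qed

lemma wop_rep_Y:
  assumes "i \<in> {1..n}"
  shows "wop n (replicate k (Yg i) @ w) v \<gamma> = (wop n w v (\<gamma>(i := \<gamma> i + k)) :: 'k::field)"
proof (induction k arbitrary: \<gamma>)
  case 0 then show ?case by simp
next
  case (Suc k)
  show ?case
  proof (cases "adm n \<gamma>")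
    case True
    have "wop n (replicate (Suc k) (Yg i) @ w) v \<gamma> = wop n (replicate k (Yg i) @ w) v (\<gamma>(i := Suc (\<gamma> i)))"
      using True by (simp add: Yop_def)
    also have "\<dots> = wop n w v ((\<gamma>(i := Suc (\<gamma> i)))(i := (\<gamma>(i := Suc (\<gamma> i))) i + k))"
      by (rule Suc.IH)
    also have "(\<gamma>(i := Suc (\<gamma> i)))(i := (\<gamma>(i := Suc (\<gamma> i))) i + k) = \<gamma>(i := \<gamma> i + Suc k)" by simp
    finally show ?thesis .
  next
    case False
    then have "\<not> adm n (\<gamma>(i := \<gamma> i + Suc k))" using assms by simp
    then have h: "wop n w v (\<gamma>(i := \<gamma> i + Suc k)) = 0" by (rule wop_nadm)
    have l: "wop n (replicate (Suc k) (Yg i) @ w) v \<gamma> = 0" using False by (simp add: Yop_def)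
    show ?thesis unfolding l h by (rule refl)
  qed
qed

lemma wop_ord_wordX:
  "m \<le> n \<Longrightarrow> wop n (ord_word Xg m \<alpha> @ w) v \<gamma> =
     (if (\<forall>i\<in>{1..m}. \<alpha> i \<le> \<gamma> i) then wop n w v (\<lambda>i. if i \<in> {1..m} then \<gamma> i - \<alpha> i else \<gamma> i)
      else (0::'k::field))"
proof (induction m arbitrary: \<gamma>)
  case 0 then show ?case by simp
next
  case (Suc m)
  let ?g = "\<gamma>(Suc m := \<gamma> (Suc m) - \<alpha> (Suc m))"
  have "wop n (ord_word Xg (Suc m) \<alpha> @ w) v \<gamma> = wop n (replicate (\<alpha> (Suc m)) (Xg (Suc m)) @ (ord_word Xg m \<alpha> @ w)) v \<gamma>"
    by simp
  also have "\<dots> = (if \<alpha> (Suc m) \<le> \<gamma> (Suc m) then wop n (ord_word Xg m \<alpha> @ w) v ?g else 0)"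
    using Suc.prems by (subst wop_rep_X) auto
  also have "\<dots> = (if \<alpha> (Suc m) \<le> \<gamma> (Suc m) then
      (if (\<forall>i\<in>{1..m}. \<alpha> i \<le> ?g i) then wop n w v (\<lambda>i. if i \<in> {1..m} then ?g i - \<alpha> i else ?g i) else 0) else 0)"
    using Suc by simp
  also have "\<dots> = (if (\<forall>i\<in>{1..Suc m}. \<alpha> i \<le> \<gamma> i) then wop n w v (\<lambda>i. if i \<in> {1..Suc m} then \<gamma> i - \<alpha> i else \<gamma> i) else 0)"
  proof -
    have e: "(\<lambda>i. if i \<in> {1..m} then ?g i - \<alpha> i else ?g i) = (\<lambda>i. if i \<in> {1..Suc m} then \<gamma> i - \<alpha> i else \<gamma> i)"
      by (auto simp: fun_eq_iff)
    have c: "(\<alpha> (Suc m) \<le> \<gamma> (Suc m) \<and> (\<forall>i\<in>{1..m}. \<alpha> i \<le> ?g i)) = (\<forall>i\<in>{1..Suc m}. \<alpha> i \<le> \<gamma> i)"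
      by (auto simp: le_Suc_eq)
    show ?thesis using e c by (auto simp del: fun_upd_apply)
  qed
  finally show ?case .
qed

lemma wop_ord_wordY:
  "m \<le> n \<Longrightarrow> wop n (ord_word Yg m \<beta> @ w) v \<gamma> =
     (wop n w v (\<lambda>i. if i \<in> {1..m} then \<gamma> i + \<beta> i else \<gamma> i) :: 'k::field)"
proof (induction m arbitrary: \<gamma>)
  case 0 then show ?case by simp
next
  case (Suc m)
  let ?g = "\<gamma>(Suc m := \<gamma> (Suc m) + \<beta> (Suc m))"
  have "wop n (ord_word Yg (Suc m) \<beta> @ w) v \<gamma> = wop n (replicate (\<beta> (Suc m)) (Yg (Suc m)) @ (ord_word Yg m \<beta> @ w)) v \<gamma>"
    by simp
  also have "\<dots> = wop n (ord_word Yg m \<beta> @ w) v ?g"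
    using Suc.prems by (subst wop_rep_Y) auto
  also have "\<dots> = wop n w v (\<lambda>i. if i \<in> {1..m} then ?g i + \<beta> i else ?g i)"
    using Suc by simp
  also have "(\<lambda>i. if i \<in> {1..m} then ?g i + \<beta> i else ?g i) = (\<lambda>i. if i \<in> {1..Suc m} then \<gamma> i + \<beta> i else \<gamma> i)"
    by (auto simp: fun_eq_iff)
  finally show ?case .
qed

definition Mop :: "nat \<Rightarrow> (nat \<Rightarrow> nat) \<Rightarrow> (nat \<Rightarrow> nat) \<Rightarrow> ('k::field) op" where
  "Mop n \<alpha> \<beta> = wop n (ord_word Xg n \<alpha> @ ord_word Yg n \<beta>)"

lemma Mop_formula:
  assumes "adm n \<alpha>" "adm n \<beta>"
  shows "Mop n \<alpha> \<beta> v \<gamma> = (if adm n \<gamma> \<and> (\<forall>i. \<alpha> i \<le> \<gamma> i) then v (\<lambda>i. \<gamma> i - \<alpha> i + \<beta> i) else (0::'k::field))"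
proof -
  let ?g1 = "\<lambda>i. if i \<in> {1..n} then \<gamma> i - \<alpha> i else \<gamma> i"
  let ?g2 = "\<lambda>i. if i \<in> {1..n} then ?g1 i + \<beta> i else ?g1 i"
  have "Mop n \<alpha> \<beta> v \<gamma> = (if (\<forall>i\<in>{1..n}. \<alpha> i \<le> \<gamma> i) then wop n (ord_word Yg n \<beta>) v ?g1 else 0)"
    unfolding Mop_def by (rule wop_ord_wordX) simp
  also have "wop n (ord_word Yg n \<beta>) v ?g1 = Rop n v ?g2"
    using wop_ord_wordY[OF order_refl, of n \<beta> "[]" v ?g1] by (simp only: append_Nil2 wop.simps)
  also have "?g2 = (\<lambda>i. \<gamma> i - \<alpha> i + \<beta> i)"
    using assms by (auto simp: fun_eq_iff adm_def)
  finally have e1: "Mop n \<alpha> \<beta> v \<gamma> = (if (\<forall>i\<in>{1..n}. \<alpha> i \<le> \<gamma> i) then Rop n v (\<lambda>i. \<gamma> i - \<alpha> i + \<beta> i) else 0)" .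
  have e2: "adm n (\<lambda>i. \<gamma> i - \<alpha> i + \<beta> i) = adm n \<gamma>"
    using assms by (auto simp: adm_def)
  have e3: "(\<forall>i\<in>{1..n}. \<alpha> i \<le> \<gamma> i) = (\<forall>i. \<alpha> i \<le> \<gamma> i)"
  proof
    assume h: "\<forall>i\<in>{1..n}. \<alpha> i \<le> \<gamma> i"
    show "\<forall>i. \<alpha> i \<le> \<gamma> i"
    proof
      fix i
      show "\<alpha> i \<le> \<gamma> i"
      proof (cases "i \<in> {1..n}")
        case True with h show ?thesis by blast
      next
        case False then have "\<alpha> i = 0" using assms(1) unfolding adm_def by blast
        then show ?thesis by simp
      qed
    qed
  qed auto
  show ?thesis using e1 e2 e3 by (auto simp: Rop_def)
qed

lemma wrel_wop:
  assumes "wrel n (TYPE('k::field)) u w"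
  shows "wop n u v \<gamma> = (wop n w v \<gamma> :: 'k)"
proof -
  have u: "nc_mon u \<in> ncP n" and w: "nc_mon w \<in> ncP n"
    and r: "nc_sub (nc_mon u) (nc_mon w :: 'k ncpoly) \<in> relI n"
    using assms unfolding wrel_def by (auto intro: ncP_mon)
  have "rep_poly n (nc_sub (nc_mon u) (nc_mon w :: 'k ncpoly)) v \<gamma> = 0" by (rule rep_poly_relI[OF r])
  then show ?thesis by (simp add: rep_poly_sub[OF u w] rep_poly_mon)
qed

lemma sum_regroup:
  assumes "finite S"
  shows "(\<Sum>w\<in>S. a w * H (N w)) = (\<Sum>p\<in>N ` S. (\<Sum>w\<in>{w\<in>S. N w = p}. a w) * (H p :: 'k::field))"
  using assms by (subst sum.image_gen[of S _ N]) (auto simp: sum_distrib_right intro!: sum.cong)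

definition nf_word :: "nat \<Rightarrow> (nat \<Rightarrow> nat) \<times> (nat \<Rightarrow> nat) \<Rightarrow> gen list" where
  "nf_word n p = ord_word Xg n (fst p) @ ord_word Yg n (snd p)"

lemma relI_substitute_words:
  assumes S: "finite S" "{w. f w \<noteq> 0} \<subseteq> S"
    and M: "\<And>w. w \<in> S \<Longrightarrow> wrel n (TYPE('k)) w (M w)"
  shows "nc_sub f (\<lambda>x. \<Sum>w\<in>S. f w * nc_mon (M w) x) \<in> (relI n :: ('k::field) ncpoly set)"
proof -
  have fs: "f x = (\<Sum>w\<in>S. f w * nc_mon w x)" for x
  proof -
    have "(\<Sum>w\<in>S. f w * nc_mon w x) = (\<Sum>w\<in>S. if w = x then f x else 0)"
      by (intro sum.cong) (auto simp: nc_mon_def)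
    also have "\<dots> = f x" using S by (auto simp: sum.delta')
    finally show ?thesis by simp
  qed
  have "nc_sub f (\<lambda>x. \<Sum>w\<in>S. f w * nc_mon (M w) x) =
      (\<lambda>x. \<Sum>w\<in>S. nc_smult (f w) (nc_sub (nc_mon w) (nc_mon (M w))) x)"
  proof (rule ext)
    fix x
    have "nc_sub f (\<lambda>x. \<Sum>w\<in>S. f w * nc_mon (M w) x) x
        = (\<Sum>w\<in>S. f w * nc_mon w x) - (\<Sum>w\<in>S. f w * nc_mon (M w) x)"
      unfolding nc_sub_def by (subst fs) (rule refl)
    also have "\<dots> = (\<Sum>w\<in>S. nc_smult (f w) (nc_sub (nc_mon w) (nc_mon (M w))) x)"
      by (simp add: nc_sub_def nc_smult_def sum_subtractf[symmetric] algebra_simps)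
    finally show "nc_sub f (\<lambda>x. \<Sum>w\<in>S. f w * nc_mon (M w) x) x =
        (\<lambda>x. \<Sum>w\<in>S. nc_smult (f w) (nc_sub (nc_mon w) (nc_mon (M w))) x) x" by simp
  qed
  also have "\<dots> \<in> relI n"
    using M S unfolding wrel_def by (intro relI_sum relI.rel_smult) auto
  finally show ?thesis .
qed

lemma rep_poly_normal_form:
  assumes f: "(f::'k::field ncpoly) \<in> ncP n"
  shows "\<exists>P c. finite P \<and> (\<forall>p\<in>P. adm n (fst p) \<and> adm n (snd p)) \<and>
     (\<forall>v \<gamma>. rep_poly n f v \<gamma> = (\<Sum>p\<in>P. c p * Mop n (fst p) (snd p) v \<gamma>)) \<and>
     nc_sub f (\<lambda>x. \<Sum>p\<in>P. c p * nc_mon (nf_word n p) x) \<in> relI n"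
proof -
  define S where "S = {w. f w \<noteq> 0}"
  have S: "finite S" using f unfolding S_def ncP_def by auto
  have Sg: "set w \<subseteq> gens n" if "w \<in> S" for w using f that unfolding S_def ncP_def by auto
  define N where "N w = (SOME p. adm n (fst p) \<and> adm n (snd p) \<and> wrel n (TYPE('k)) w (nf_word n p))" for w
  have N: "adm n (fst (N w)) \<and> adm n (snd (N w)) \<and> wrel n (TYPE('k)) w (nf_word n (N w))" if wS: "w \<in> S" for w
  proof -
    obtain \<alpha> \<beta> where "adm n \<alpha>" "adm n \<beta>" "wrel n (TYPE('k)) w (ord_word Xg n \<alpha> @ ord_word Yg n \<beta>)"
      using word_normal_form[OF Sg[OF wS]] by blast
    then have "\<exists>p. adm n (fst p) \<and> adm n (snd p) \<and> wrel n (TYPE('k)) w (nf_word n p)"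
      by (intro exI[of _ "(\<alpha>, \<beta>)"]) (simp add: nf_word_def)
    then show ?thesis unfolding N_def by (rule someI_ex)
  qed
  define P where "P = N ` S"
  define c where "c p = (\<Sum>w\<in>{w\<in>S. N w = p}. f w)" for p
  have "finite P" using S unfolding P_def by simp
  moreover have "\<forall>p\<in>P. adm n (fst p) \<and> adm n (snd p)" using N unfolding P_def by auto
  moreover have "rep_poly n f v \<gamma> = (\<Sum>p\<in>P. c p * Mop n (fst p) (snd p) v \<gamma>)" for v \<gamma>
  proof -
    have "rep_poly n f v \<gamma> = (\<Sum>w\<in>S. f w * wop n w v \<gamma>)" unfolding rep_poly_def S_def ..
    also have "\<dots> = (\<Sum>w\<in>S. f w * Mop n (fst (N w)) (snd (N w)) v \<gamma>)"
      by (intro sum.cong refl) (simp add: Mop_def wrel_wop[OF N[THEN conjunct2, THEN conjunct2]] nf_word_def)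
    also have "\<dots> = (\<Sum>p\<in>P. c p * Mop n (fst p) (snd p) v \<gamma>)"
      unfolding P_def c_def by (rule sum_regroup[OF S, where H = "\<lambda>p. Mop n (fst p) (snd p) v \<gamma>"])
    finally show ?thesis .
  qed
  moreover have "nc_sub f (\<lambda>x. \<Sum>p\<in>P. c p * nc_mon (nf_word n p) x) \<in> relI n"
  proof -
    have "(\<lambda>x. \<Sum>p\<in>P. c p * nc_mon (nf_word n p) x) = (\<lambda>x. \<Sum>w\<in>S. f w * nc_mon (nf_word n (N w)) x)"
      unfolding P_def c_def by (rule ext, rule sum_regroup[OF S, symmetric])
    moreover have "nc_sub f (\<lambda>x. \<Sum>w\<in>S. f w * nc_mon (nf_word n (N w)) x) \<in> relI n"
      using N by (intro relI_substitute_words[OF S]) (auto simp: S_def)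
    ultimately show ?thesis by simp
  qed
  ultimately show ?thesis by blast
qed

definition delta :: "(nat \<Rightarrow> nat) \<Rightarrow> ('k::field) vec" where
  "delta \<mu> = (\<lambda>\<gamma>. if \<gamma> = \<mu> then 1 else 0)"

abbreviation vac :: "nat \<Rightarrow> nat" where "vac \<equiv> (\<lambda>_. 0)"

lemma adm_vac [simp]: "adm n vac" by (simp add: adm_def)

lemma mono_delta_nonzero:
  assumes adm: "adm n \<alpha>" "adm n \<beta>" "adm n \<alpha>0" "adm n \<beta>0"
    and nz: "Mop n \<alpha> \<beta> (delta \<beta>0) \<alpha>0 \<noteq> (0::'k::field)"
  shows "(\<alpha>, \<beta>) = (\<alpha>0, \<beta>0) \<or> (\<Sum>i\<in>{1..n}. \<beta> i) < (\<Sum>i\<in>{1..n}. \<beta>0 i)"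
proof -
  have le: "\<forall>i. \<alpha> i \<le> \<alpha>0 i" and eq: "(\<lambda>i. \<alpha>0 i - \<alpha> i + \<beta> i) = \<beta>0"
    using nz adm by (auto simp: Mop_formula delta_def split: if_splits)
  have bl: "\<beta> i \<le> \<beta>0 i" for i using fun_cong[OF eq, of i] by auto
  show ?thesis
  proof (cases "\<beta> = \<beta>0")
    case True
    have "\<alpha> = \<alpha>0"
    proof (rule ext)
      fix i
      have "\<alpha>0 i - \<alpha> i + \<beta> i = \<beta>0 i" using fun_cong[OF eq, of i] by simp
      with True le[rule_format, of i] show "\<alpha> i = \<alpha>0 i" by simp
    qed
    then show ?thesis using True by simp
  next
    case False
    then obtain i where i: "\<beta> i \<noteq> \<beta>0 i" by auto
    have "i \<in> {1..n}"
    proof (rule ccontr)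
      assume "i \<notin> {1..n}"
      then have "\<beta> i = 0" "\<beta>0 i = 0" using adm unfolding adm_def by auto
      with i show False by simp
    qed
    moreover have "\<beta> i < \<beta>0 i" using bl[of i] i by simp
    ultimately show ?thesis by (intro disjI2 sum_strict_mono_ex1) (auto simp: bl)
  qed
qed

text \<open>The normal-form operators are linearly independent: evaluating a combination at
  \<open>\<delta>\<^sub>\<beta>\<^sub>0\<close>, index \<open>\<alpha>\<^sub>0\<close>, for a term \<open>(\<alpha>\<^sub>0,\<beta>\<^sub>0)\<close> with \<open>\<beta>\<^sub>0\<close> of minimal degree isolates its
  coefficient.\<close>

lemma mono_ops_independent:
  assumes P: "finite P" "\<forall>p\<in>P. adm n (fst p) \<and> adm n (snd p)"
    and z: "\<And>\<mu> \<gamma>. adm n \<mu> \<Longrightarrow> adm n \<gamma> \<Longrightarrow> (\<Sum>p\<in>P. c p * Mop n (fst p) (snd p) (delta \<mu>) \<gamma>) = (0::'k::field)"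
  shows "\<forall>p\<in>P. c p = 0"
proof (rule ccontr)
  assume "\<not> (\<forall>p\<in>P. c p = 0)"
  define P' where "P' = {p\<in>P. c p \<noteq> 0}"
  define sz where "sz p = (\<Sum>i\<in>{1..n}. snd p i)" for p :: "(nat \<Rightarrow> nat) \<times> (nat \<Rightarrow> nat)"
  have "P' \<noteq> {}" "finite P'" using \<open>\<not> (\<forall>p\<in>P. c p = 0)\<close> P unfolding P'_def by auto
  then have "Min (sz ` P') \<in> sz ` P'" by (intro Min_in) auto
  then obtain p0 where p0: "p0 \<in> P'" "sz p0 = Min (sz ` P')" by auto
  have p0min: "sz p0 \<le> sz q" if "q \<in> P'" for q using p0(2) \<open>finite P'\<close> that by simp
  define \<alpha>0 \<beta>0 where "\<alpha>0 = fst p0" and "\<beta>0 = snd p0"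
  have adm0: "adm n \<alpha>0" "adm n \<beta>0" and c0: "c p0 \<noteq> 0" using p0 P unfolding P'_def \<alpha>0_def \<beta>0_def by auto
  have diag: "Mop n (fst p0) (snd p0) (delta \<beta>0) \<alpha>0 = (1::'k)"
    using adm0 unfolding \<alpha>0_def \<beta>0_def by (simp add: Mop_formula delta_def)
  have tm: "c p * Mop n (fst p) (snd p) (delta \<beta>0) \<alpha>0 = (if p = p0 then c p0 else 0)" if pP: "p \<in> P" for p
  proof (cases "c p * Mop n (fst p) (snd p) (delta \<beta>0) \<alpha>0 = 0")
    case False
    then have "p \<in> P'" "Mop n (fst p) (snd p) (delta \<beta>0) \<alpha>0 \<noteq> (0::'k)" using pP unfolding P'_def by auto
    then have "p = p0" using mono_delta_nonzero[of n "fst p" "snd p" \<alpha>0 \<beta>0] P pP adm0 p0min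
      unfolding sz_def \<alpha>0_def \<beta>0_def by (fastforce simp: prod_eq_iff)
    then show ?thesis using diag by simp
  next
    case True
    then have "p \<noteq> p0" using c0 diag by auto
    with True show ?thesis by simp
  qed
  have "(\<Sum>p\<in>P. c p * Mop n (fst p) (snd p) (delta \<beta>0) \<alpha>0) = (\<Sum>p\<in>P. if p = p0 then c p0 else 0)"
    by (intro sum.cong refl tm)
  also have "\<dots> = c p0" using p0 P unfolding P'_def by (simp add: sum.delta')
  finally show False using z[OF adm0(2) adm0(1)] c0 by simp
qed

lemma rep_poly_faithful:
  assumes f: "f \<in> ncP n" and z: "\<And>v \<gamma>. rep_poly n f v \<gamma> = (0::'k::field)"
  shows "f \<in> relI n"
proof -
  obtain P c where P: "finite P" "\<forall>p\<in>P. adm n (fst p) \<and> adm n (snd p)"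
    and e: "\<forall>v \<gamma>. rep_poly n f v \<gamma> = (\<Sum>p\<in>P. c p * Mop n (fst p) (snd p) v \<gamma>)"
    and r: "nc_sub f (\<lambda>x. \<Sum>p\<in>P. c p * nc_mon (nf_word n p) x) \<in> relI n"
    using rep_poly_normal_form[OF f] by blast
  have "\<forall>p\<in>P. c p = 0" by (rule mono_ops_independent[OF P]) (use e z in auto)
  then have "(\<lambda>x. \<Sum>p\<in>P. c p * nc_mon (nf_word n p) x) = (\<lambda>x. 0)" by auto
  with r show ?thesis by (simp add: nc_sub_def)
qed

definition addop :: "('k::field) op \<Rightarrow> 'k op \<Rightarrow> 'k op" where
  "addop a b = (\<lambda>v \<gamma>. a v \<gamma> + b v \<gamma>)"
definition smop :: "'k::field \<Rightarrow> 'k op \<Rightarrow> 'k op" where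
  "smop c a = (\<lambda>v \<gamma>. c * a v \<gamma>)"
definition zop :: "('k::field) op" where
  "zop = (\<lambda>v \<gamma>. 0)"

definition op_alg :: "nat \<Rightarrow> ('k::field) op set" where
  "op_alg n = rep_poly n ` ncP n"

lemma op_alg_add: "a \<in> op_alg n \<Longrightarrow> b \<in> op_alg n \<Longrightarrow> addop a b \<in> op_alg n"
proof -
  assume "a \<in> op_alg n" "b \<in> op_alg n"
  then obtain f g where f: "f \<in> ncP n" "a = rep_poly n f" and g: "g \<in> ncP n" "b = rep_poly n g"
    unfolding op_alg_def by auto
  have "addop a b = rep_poly n (nc_add f g)" using f g by (auto simp: addop_def rep_poly_add fun_eq_iff)
  then show ?thesis using f g ncP_add unfolding op_alg_def by auto
qed

lemma op_alg_smult: "a \<in> op_alg n \<Longrightarrow> smop c a \<in> op_alg n"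
proof -
  assume "a \<in> op_alg n"
  then obtain f where f: "f \<in> ncP n" "a = rep_poly n f" unfolding op_alg_def by auto
  have "smop c a = rep_poly n (nc_smult c f)" using f by (auto simp: smop_def rep_poly_smult fun_eq_iff)
  then show ?thesis using f ncP_smult unfolding op_alg_def by auto
qed

lemma op_alg_comp: "a \<in> op_alg n \<Longrightarrow> b \<in> op_alg n \<Longrightarrow> a \<circ> b \<in> op_alg n"
proof -
  assume "a \<in> op_alg n" "b \<in> op_alg n"
  then obtain f g where f: "f \<in> ncP n" "a = rep_poly n f" and g: "g \<in> ncP n" "b = rep_poly n g"
    unfolding op_alg_def by auto
  have "a \<circ> b = rep_poly n (nc_mult f g)" unfolding f(2) g(2) by (auto simp: rep_poly_mult fun_eq_iff f g)
  then show ?thesis using f g ncP_mult unfolding op_alg_def by auto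
qed

lemma op_alg_wop: "set w \<subseteq> gens n \<Longrightarrow> wop n w \<in> op_alg n"
  unfolding op_alg_def using rep_poly_mon[of n w] ncP_mon[of w n] by (metis image_eqI)

lemma op_alg_R: "Rop n \<in> op_alg n"
  using op_alg_wop[of "[]" n] by simp

lemma op_alg_zero: "zop \<in> op_alg n"
proof -
  have "zop = rep_poly n (\<lambda>w. 0)" by (auto simp: zop_def rep_poly_zero fun_eq_iff)
  then show ?thesis using ncP_zero unfolding op_alg_def by auto
qed

lemma Xop_R: "i \<in> {1..n} \<Longrightarrow> Xop n i \<circ> Rop n = Xop n i" and Yop_R: "i \<in> {1..n} \<Longrightarrow> Yop n i \<circ> Rop n = Yop n i"
  by (auto simp: fun_eq_iff Xop_def Yop_def Rop_def)

lemma wop_X: "i \<in> {1..n} \<Longrightarrow> wop n [Xg i] = Xop n i" using Xop_R by simp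
lemma wop_Y: "i \<in> {1..n} \<Longrightarrow> wop n [Yg i] = Yop n i" using Yop_R by simp

lemma op_alg_X: "i \<in> {1..n} \<Longrightarrow> Xop n i \<in> op_alg n"
proof -
  assume i: "i \<in> {1..n}"
  have "wop n [Xg i] \<in> op_alg n" by (rule op_alg_wop) (use i in simp)
  then show ?thesis by (simp only: wop_X[OF i])
qed
lemma op_alg_Y: "i \<in> {1..n} \<Longrightarrow> Yop n i \<in> op_alg n"
proof -
  assume i: "i \<in> {1..n}"
  have "wop n [Yg i] \<in> op_alg n" by (rule op_alg_wop) (use i in simp)
  then show ?thesis by (simp only: wop_Y[OF i])
qed

lemma op_alg_Mop: "Mop n \<alpha> \<beta> \<in> op_alg n"
  unfolding Mop_def by (rule op_alg_wop) simp

lemma op_alg_nf: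
  assumes "(a::'k::field op) \<in> op_alg n"
  shows "\<exists>P c. finite P \<and> (\<forall>p\<in>P. adm n (fst p) \<and> adm n (snd p)) \<and>
     a = (\<lambda>v \<gamma>. \<Sum>p\<in>P. c p * Mop n (fst p) (snd p) v \<gamma>)"
proof -
  obtain f where f: "f \<in> ncP n" "a = rep_poly n f" using assms unfolding op_alg_def by auto
  then show ?thesis using rep_poly_normal_form[OF f(1)] by (auto simp: fun_eq_iff)
qed

lemma op_alg_lin:
  assumes "a \<in> op_alg n"
  shows "a (\<lambda>\<gamma>. \<Sum>b\<in>B. c b * u b \<gamma>) \<gamma>' = (\<Sum>b\<in>B. c b * a (u b) \<gamma>')"
  using assms rep_poly_lin unfolding op_alg_def by auto

lemma op_alg_add_vec:
  assumes "a \<in> op_alg n"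
  shows "a (\<lambda>\<gamma>. u \<gamma> + w \<gamma>) \<gamma>' = a u \<gamma>' + a w \<gamma>'"
  using op_alg_lin[OF assms, where B="{0::nat,1}" and c="\<lambda>_. 1" and u="\<lambda>b. if b = 0 then u else w" and \<gamma>'=\<gamma>'] by simp

lemma op_alg_smult_vec:
  assumes "a \<in> op_alg n"
  shows "a (\<lambda>\<gamma>. k * u \<gamma>) \<gamma>' = k * a u \<gamma>'"
  using op_alg_lin[OF assms, where B="{0::nat}" and c="\<lambda>_. k" and u="\<lambda>_. u" and \<gamma>'=\<gamma>'] by simp

lemma op_alg_nadm:
  assumes "a \<in> op_alg n" "\<not> adm n \<gamma>"
  shows "a v \<gamma> = 0"
  using assms unfolding op_alg_def rep_poly_def by (auto simp: wop_nadm)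

lemma op_alg_Rop:
  assumes "a \<in> op_alg n"
  shows "a (Rop n v) \<gamma> = a v \<gamma>"
proof -
  have "wop n w (Rop n v) = wop n w v" for w using wop_append[of n w "[]" v] by simp
  then show ?thesis using assms unfolding op_alg_def rep_poly_def by auto
qed

lemma op_alg_zero_test:
  assumes a: "(a::'k::field op) \<in> op_alg n" and z: "\<And>\<mu> \<gamma>. adm n \<mu> \<Longrightarrow> a (delta \<mu>) \<gamma> = 0"
  shows "a = zop"
proof -
  obtain P c where P: "finite P" "\<forall>p\<in>P. adm n (fst p) \<and> adm n (snd p)"
    and e: "a = (\<lambda>v \<gamma>. \<Sum>p\<in>P. c p * Mop n (fst p) (snd p) v \<gamma>)"
    using op_alg_nf[OF a] by blast
  have "\<forall>p\<in>P. c p = 0" by (rule mono_ops_independent[OF P]) (use e z in auto)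
  then show ?thesis unfolding e zop_def by auto
qed

lemma op_alg_eq_test:
  assumes a: "(a::'k::field op) \<in> op_alg n" and b: "b \<in> op_alg n"
    and z: "\<And>\<mu> \<gamma>. adm n \<mu> \<Longrightarrow> a (delta \<mu>) \<gamma> = b (delta \<mu>) \<gamma>"
  shows "a = b"
proof -
  have m: "addop a (smop (-1) b) \<in> op_alg n" by (intro op_alg_add op_alg_smult a b)
  have "addop a (smop (-1) b) = zop"
    by (rule op_alg_zero_test[OF m]) (simp add: addop_def smop_def z)
  then have h: "a v \<gamma> + -1 * b v \<gamma> = 0" for v \<gamma>
    unfolding addop_def smop_def zop_def by (metis (no_types, lifting))
  show ?thesis
  proof (intro ext)
    fix v \<gamma> show "a v \<gamma> = b v \<gamma>" using h[of v \<gamma>] by (simp add: algebra_simps)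
  qed
qed

section \<open>Transport from \<open>S\<^sub>n\<close> to the operator algebra\<close>

text \<open>A congruence class acts through any of its representatives; by faithfulness this identifies
  \<open>S\<^sub>n\<close> with \<open>op_alg n\<close>.\<close>

definition rep_cls :: "nat \<Rightarrow> ('k::field) ncpoly set \<Rightarrow> 'k op" where
  "rep_cls n A = rep_poly n (SOME a. a \<in> A)"

lemma Sn_cls: "f \<in> ncP n \<Longrightarrow> Sn_class n f \<in> Sn n"
  unfolding Sn_def Sn_class_def by (rule quotientI)

lemma Sn_elem: "A \<in> Sn n \<Longrightarrow> \<exists>f\<in>ncP n. A = Sn_class n f"
  unfolding Sn_def Sn_class_def by (auto elim: quotientE)

lemma cls_mem: "f \<in> ncP n \<Longrightarrow> f \<in> Sn_class n f"
  unfolding Sn_class_def by (auto simp: Srel_def relI_sub_self)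

lemma cls_rel: "g \<in> Sn_class n f \<Longrightarrow> g \<in> ncP n \<and> nc_sub f g \<in> relI n"
  unfolding Sn_class_def Srel_def by auto

lemma some_in: "A \<in> Sn n \<Longrightarrow> (SOME a. a \<in> A) \<in> A \<and> (SOME a. a \<in> A) \<in> ncP n"
proof -
  assume "A \<in> Sn n"
  then obtain f where f: "f \<in> ncP n" "A = Sn_class n f" using Sn_elem by blast
  then have "f \<in> A" using cls_mem by simp
  then have "(SOME a. a \<in> A) \<in> A" using someI[of "\<lambda>a. a \<in> A" f] by blast
  then show ?thesis using f cls_rel by blast
qed

lemma rep_cls_cls: "f \<in> ncP n \<Longrightarrow> rep_cls n (Sn_class n f) = rep_poly n f"
proof -
  assume f: "f \<in> ncP n"
  then have s: "(SOME a. a \<in> Sn_class n f) \<in> Sn_class n f" using some_in Sn_cls by blast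
  then have a: "(SOME a. a \<in> Sn_class n f) \<in> ncP n"
    and r: "nc_sub f (SOME a. a \<in> Sn_class n f) \<in> relI n" using cls_rel by auto
  show ?thesis unfolding rep_cls_def
    using rep_poly_relI[OF r] by (auto simp: fun_eq_iff rep_poly_sub[OF f a])
qed

lemma rep_cls_inj: "inj_on (rep_cls n :: ('k::field) ncpoly set \<Rightarrow> 'k op) (Sn n)"
proof (rule inj_onI)
  fix A B :: "'k ncpoly set"
  assume A: "A \<in> Sn n" and B: "B \<in> Sn n" and e: "rep_cls n A = rep_cls n B"
  obtain f where f: "f \<in> ncP n" "A = Sn_class n f" using Sn_elem[OF A] by blast
  obtain g where g: "g \<in> ncP n" "B = Sn_class n g" using Sn_elem[OF B] by blast
  have "rep_poly n f = rep_poly n g" using e f g by (simp add: rep_cls_cls)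
  then have "\<And>v \<gamma>. rep_poly n (nc_sub f g) v \<gamma> = 0" by (simp add: rep_poly_sub f g)
  then have "nc_sub f g \<in> relI n" by (rule rep_poly_faithful[OF ncP_sub[OF f(1) g(1)]])
  then have "(f, g) \<in> Srel n" using f g unfolding Srel_def by auto
  then show "A = B" using f g unfolding Sn_class_def by (simp add: equiv_class_eq[OF equiv_Srel])
qed

lemma rep_cls_img: "rep_cls n ` Sn n = op_alg n"
proof
  show "rep_cls n ` Sn n \<subseteq> op_alg n" unfolding op_alg_def using some_in by (auto simp: rep_cls_def)
  show "op_alg n \<subseteq> rep_cls n ` Sn n"
  proof
    fix a assume "a \<in> op_alg n"
    then obtain f where "f \<in> ncP n" "a = rep_poly n f" unfolding op_alg_def by auto
    then show "a \<in> rep_cls n ` Sn n" using Sn_cls rep_cls_cls by (metis image_eqI)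
  qed
qed

lemma Sn_add_in: "A \<in> Sn n \<Longrightarrow> B \<in> Sn n \<Longrightarrow> Sn_add n A B \<in> Sn n"
  unfolding Sn_add_def by (intro Sn_cls ncP_add) (auto dest: some_in)
lemma Sn_mult_in: "A \<in> Sn n \<Longrightarrow> B \<in> Sn n \<Longrightarrow> Sn_mult n A B \<in> Sn n"
  unfolding Sn_mult_def by (intro Sn_cls ncP_mult) (auto dest: some_in)
lemma Sn_smult_in: "A \<in> Sn n \<Longrightarrow> Sn_smult n c A \<in> Sn n"
  unfolding Sn_smult_def by (intro Sn_cls ncP_smult) (auto dest: some_in)

lemma rep_cls_add: "A \<in> Sn n \<Longrightarrow> B \<in> Sn n \<Longrightarrow> rep_cls n (Sn_add n A B) = addop (rep_cls n A) (rep_cls n B)"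
proof -
  assume A: "A \<in> Sn n" and B: "B \<in> Sn n"
  have a: "(SOME a. a \<in> A) \<in> ncP n" and b: "(SOME a. a \<in> B) \<in> ncP n" using some_in A B by blast+
  show ?thesis unfolding Sn_add_def
    by (subst rep_cls_cls) (auto intro!: ncP_add a b simp: rep_poly_add[OF a b] rep_cls_def addop_def fun_eq_iff)
qed
lemma rep_cls_mult: "A \<in> Sn n \<Longrightarrow> B \<in> Sn n \<Longrightarrow> rep_cls n (Sn_mult n A B) = rep_cls n A \<circ> rep_cls n B"
proof -
  assume A: "A \<in> Sn n" and B: "B \<in> Sn n"
  have a: "(SOME a. a \<in> A) \<in> ncP n" and b: "(SOME a. a \<in> B) \<in> ncP n" using some_in A B by blast+
  show ?thesis unfolding Sn_mult_def
    by (subst rep_cls_cls) (auto intro!: ncP_mult a b simp: rep_poly_mult[OF a b] rep_cls_def fun_eq_iff)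
qed
lemma rep_cls_smult: "A \<in> Sn n \<Longrightarrow> rep_cls n (Sn_smult n c A) = smop c (rep_cls n A)"
proof -
  assume A: "A \<in> Sn n"
  have a: "(SOME a. a \<in> A) \<in> ncP n" using some_in A by blast
  show ?thesis unfolding Sn_smult_def
    by (subst rep_cls_cls) (auto intro!: ncP_smult a simp: rep_poly_smult[OF a] rep_cls_def smop_def fun_eq_iff)
qed
lemma rep_cls_one: "rep_cls n (Sn_one n) = Rop n"
  unfolding Sn_one_def by (subst rep_cls_cls) (auto intro!: ncP_mon simp: rep_poly_mon)
lemma rep_cls_x: "i \<in> {1..n} \<Longrightarrow> rep_cls n (Sn_x n i) = Xop n i"
  unfolding Sn_x_def by (subst rep_cls_cls) (auto intro!: ncP_mon simp: rep_poly_mon Xop_R)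
lemma rep_cls_y: "i \<in> {1..n} \<Longrightarrow> rep_cls n (Sn_y n i) = Yop n i"
  unfolding Sn_y_def by (subst rep_cls_cls) (auto intro!: ncP_mon simp: rep_poly_mon Yop_R)
lemma Sn_x_in: "i \<in> {1..n} \<Longrightarrow> Sn_x n i \<in> Sn n"
  unfolding Sn_x_def by (intro Sn_cls ncP_mon) auto
lemma Sn_y_in: "i \<in> {1..n} \<Longrightarrow> Sn_y n i \<in> Sn n"
  unfolding Sn_y_def by (intro Sn_cls ncP_mon) auto

definition cls_of :: "nat \<Rightarrow> ('k::field) op \<Rightarrow> 'k ncpoly set" where
  "cls_of n = inv_into (Sn n) (rep_cls n)"

lemma rep_cls_bij: "bij_betw (rep_cls n) (Sn n) (op_alg n)"
  using rep_cls_inj rep_cls_img unfolding bij_betw_def by blast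

lemma cls_of_in: "a \<in> op_alg n \<Longrightarrow> cls_of n a \<in> Sn n"
  unfolding cls_of_def by (rule inv_into_into) (simp add: rep_cls_img)

lemma rep_cls_of: "a \<in> op_alg n \<Longrightarrow> rep_cls n (cls_of n a) = a"
  unfolding cls_of_def by (rule f_inv_into_f) (simp add: rep_cls_img)

lemma cls_of_rep: "A \<in> Sn n \<Longrightarrow> cls_of n (rep_cls n A) = A"
  unfolding cls_of_def by (rule inv_into_f_f[OF rep_cls_inj])

lemma cls_of_hom:
  assumes a: "a \<in> op_alg n" and b: "b \<in> op_alg n"
  shows "cls_of n (addop a b) = Sn_add n (cls_of n a) (cls_of n b)"
    and "cls_of n (a \<circ> b) = Sn_mult n (cls_of n a) (cls_of n b)"
    and "cls_of n (smop c a) = Sn_smult n c (cls_of n a)"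
proof -
  have A: "cls_of n a \<in> Sn n" and B: "cls_of n b \<in> Sn n" using cls_of_in a b by blast+
  have "addop a b = rep_cls n (Sn_add n (cls_of n a) (cls_of n b))"
    using rep_cls_add[OF A B] a b by (simp add: rep_cls_of)
  then show "cls_of n (addop a b) = Sn_add n (cls_of n a) (cls_of n b)"
    using cls_of_rep[OF Sn_add_in[OF A B]] by simp
  have "a \<circ> b = rep_cls n (Sn_mult n (cls_of n a) (cls_of n b))"
    using rep_cls_mult[OF A B] a b by (simp add: rep_cls_of)
  then show "cls_of n (a \<circ> b) = Sn_mult n (cls_of n a) (cls_of n b)"
    using cls_of_rep[OF Sn_mult_in[OF A B]] by simp
  have "smop c a = rep_cls n (Sn_smult n c (cls_of n a))"
    using rep_cls_smult[OF A] a by (simp add: rep_cls_of)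
  then show "cls_of n (smop c a) = Sn_smult n c (cls_of n a)"
    using cls_of_rep[OF Sn_smult_in[OF A]] by simp
qed

lemma cls_of_one: "cls_of n (Rop n) = (Sn_one n :: ('k::field) ncpoly set)"
proof -
  have "(Sn_one n :: 'k ncpoly set) \<in> Sn n" unfolding Sn_one_def by (intro Sn_cls ncP_mon) auto
  then show ?thesis using cls_of_rep rep_cls_one by metis
qed

definition op_aut :: "nat \<Rightarrow> (('k::field) op \<Rightarrow> 'k op) \<Rightarrow> bool" where
  "op_aut n \<rho> \<longleftrightarrow> bij_betw \<rho> (op_alg n) (op_alg n) \<and>
     (\<forall>a\<in>op_alg n. \<forall>b\<in>op_alg n. \<rho> (addop a b) = addop (\<rho> a) (\<rho> b)) \<and>
     (\<forall>a\<in>op_alg n. \<forall>b\<in>op_alg n. \<rho> (a \<circ> b) = \<rho> a \<circ> \<rho> b) \<and>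
     (\<forall>c. \<forall>a\<in>op_alg n. \<rho> (smop c a) = smop c (\<rho> a)) \<and>
     \<rho> (Rop n) = Rop n"

lemma op_aut_in: "op_aut n \<rho> \<Longrightarrow> a \<in> op_alg n \<Longrightarrow> \<rho> a \<in> op_alg n"
  unfolding op_aut_def bij_betw_def by auto

lemma op_aut_inj: "op_aut n \<rho> \<Longrightarrow> a \<in> op_alg n \<Longrightarrow> b \<in> op_alg n \<Longrightarrow> \<rho> a = \<rho> b \<Longrightarrow> a = b"
  unfolding op_aut_def bij_betw_def inj_on_def by blast

lemma op_aut_add: "op_aut n \<rho> \<Longrightarrow> a \<in> op_alg n \<Longrightarrow> b \<in> op_alg n \<Longrightarrow> \<rho> (addop a b) = addop (\<rho> a) (\<rho> b)"
  and op_aut_comp: "op_aut n \<rho> \<Longrightarrow> a \<in> op_alg n \<Longrightarrow> b \<in> op_alg n \<Longrightarrow> \<rho> (a \<circ> b) = \<rho> a \<circ> \<rho> b"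
  and op_aut_smult: "op_aut n \<rho> \<Longrightarrow> a \<in> op_alg n \<Longrightarrow> \<rho> (smop c a) = smop c (\<rho> a)"
  and op_aut_R: "op_aut n \<rho> \<Longrightarrow> \<rho> (Rop n) = Rop n"
  unfolding op_aut_def by auto

lemma op_aut_inv:
  fixes \<rho> :: "('k::field) op \<Rightarrow> 'k op"
  assumes "op_aut n \<rho>"
  shows "op_aut n (inv_into (op_alg n) \<rho>)"
proof -
  let ?i = "inv_into (op_alg n) \<rho>"
  have bij: "bij_betw \<rho> (op_alg n) (op_alg n)" using assms unfolding op_aut_def by auto
  have bi: "bij_betw ?i (op_alg n) (op_alg n)" by (rule bij_betw_inv_into[OF bij])
  have ii: "?i (\<rho> a) = a" if "a \<in> op_alg n" for a
    using bij that by (simp add: bij_betw_def inv_into_f_f)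
  have ri: "\<rho> (?i a) = a" if "a \<in> op_alg n" for a
    using bij that by (simp add: bij_betw_def f_inv_into_f)
  have iin: "?i a \<in> op_alg n" if "a \<in> op_alg n" for a using bi that unfolding bij_betw_def by auto
  have gen: "?i (F a b) = F' (?i a) (?i b)" if "a \<in> op_alg n" "b \<in> op_alg n"
    and h: "\<And>x y. x \<in> op_alg n \<Longrightarrow> y \<in> op_alg n \<Longrightarrow> \<rho> (F' x y) = F (\<rho> x) (\<rho> y)"
    and cl: "\<And>x y. x \<in> op_alg n \<Longrightarrow> y \<in> op_alg n \<Longrightarrow> F' x y \<in> op_alg n" for F F' a b
  proof -
    have "F a b = F (\<rho> (?i a)) (\<rho> (?i b))" using that ri by simp
    also have "\<dots> = \<rho> (F' (?i a) (?i b))" using h iin that by simp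
    finally have eq: "F a b = \<rho> (F' (?i a) (?i b))" .
    show ?thesis unfolding eq by (rule ii[OF cl[OF iin iin]]) (use that in auto)
  qed
  show ?thesis unfolding op_aut_def
  proof (intro conjI ballI allI)
    show "bij_betw ?i (op_alg n) (op_alg n)" by (rule bi)
  next
    fix a b :: "'k op" assume a: "a \<in> op_alg n" and b: "b \<in> op_alg n"
    show "?i (addop a b) = addop (?i a) (?i b)"
      by (rule gen[where F=addop and F'=addop, OF a b op_aut_add[OF assms] op_alg_add])
  next
    fix a b :: "'k op" assume a: "a \<in> op_alg n" and b: "b \<in> op_alg n"
    show "?i (a \<circ> b) = ?i a \<circ> ?i b"
      by (rule gen[where F="(\<circ>)" and F'="(\<circ>)", OF a b op_aut_comp[OF assms] op_alg_comp])
  next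
    fix c and a :: "'k op" assume a: "a \<in> op_alg n"
    have "smop c a = smop c (\<rho> (?i a))" using ri a by simp
    also have "\<dots> = \<rho> (smop c (?i a))" using op_aut_smult[OF assms iin[OF a]] by simp
    finally have eq: "smop c a = \<rho> (smop c (?i a))" .
    show "?i (smop c a) = smop c (?i a)" unfolding eq by (rule ii[OF op_alg_smult[OF iin[OF a]]])
  next
    show "?i (Rop n) = Rop n" using ii[OF op_alg_R] op_aut_R[OF assms] by simp
  qed
qed

lemma op_aut_compose:
  fixes \<rho> \<rho>' :: "('k::field) op \<Rightarrow> 'k op"
  assumes r: "op_aut n \<rho>" and r': "op_aut n \<rho>'"
  shows "op_aut n (\<rho> \<circ> \<rho>')"
  unfolding op_aut_def
proof (intro conjI ballI allI)
  show "bij_betw (\<rho> \<circ> \<rho>') (op_alg n) (op_alg n)"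
    using r r' unfolding op_aut_def by (auto intro: bij_betw_trans)
next
  fix a b :: "'k op" assume "a \<in> op_alg n" "b \<in> op_alg n"
  then show "(\<rho> \<circ> \<rho>') (addop a b) = addop ((\<rho> \<circ> \<rho>') a) ((\<rho> \<circ> \<rho>') b)"
    using op_aut_add[OF r] op_aut_add[OF r'] op_aut_in[OF r'] by simp
next
  fix a b :: "'k op" assume "a \<in> op_alg n" "b \<in> op_alg n"
  then show "(\<rho> \<circ> \<rho>') (a \<circ> b) = (\<rho> \<circ> \<rho>') a \<circ> (\<rho> \<circ> \<rho>') b"
    using op_aut_comp[OF r] op_aut_comp[OF r'] op_aut_in[OF r'] by simp
next
  fix c and a :: "'k op" assume "a \<in> op_alg n"
  then show "(\<rho> \<circ> \<rho>') (smop c a) = smop c ((\<rho> \<circ> \<rho>') a)"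
    using op_aut_smult[OF r] op_aut_smult[OF r'] op_aut_in[OF r'] by simp
next
  show "(\<rho> \<circ> \<rho>') (Rop n) = Rop n" using op_aut_R[OF r] op_aut_R[OF r'] by simp
qed

lemma op_aut_zero:
  assumes "op_aut n \<rho>"
  shows "\<rho> zop = zop"
proof -
  have "\<rho> (addop zop zop) = addop (\<rho> zop) (\<rho> zop)" by (rule op_aut_add[OF assms op_alg_zero op_alg_zero])
  moreover have "addop zop zop = (zop::'a op)" by (simp add: addop_def zop_def)
  ultimately have "\<rho> zop = addop (\<rho> zop) (\<rho> zop)" by simp
  then have eq: "\<rho> zop = addop (\<rho> zop) (\<rho> zop)" .
  have "\<rho> zop v \<gamma> = 0" for v \<gamma>
  proof -
    have "\<rho> zop v \<gamma> = addop (\<rho> zop) (\<rho> zop) v \<gamma>" by (metis eq)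
    then have "\<rho> zop v \<gamma> = \<rho> zop v \<gamma> + \<rho> zop v \<gamma>" by (simp only: addop_def)
    then show ?thesis by (simp only: add_cancel_right_right)
  qed
  then show ?thesis unfolding zop_def by (intro ext) simp
qed

lemma osum_in:
  assumes "finite P" "\<And>p. p \<in> P \<Longrightarrow> F p \<in> op_alg n"
  shows "(\<lambda>v \<gamma>. \<Sum>p\<in>P. c p * F p v \<gamma>) \<in> op_alg n"
  using assms
proof (induction P rule: finite_induct)
  case empty then show ?case using op_alg_zero by (simp add: zop_def)
next
  case (insert x P)
  have "(\<lambda>v \<gamma>. \<Sum>p\<in>insert x P. c p * F p v \<gamma>) = addop (smop (c x) (F x)) (\<lambda>v \<gamma>. \<Sum>p\<in>P. c p * F p v \<gamma>)"
    using insert by (simp add: addop_def smop_def)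
  then show ?case using insert by (auto intro!: op_alg_add op_alg_smult)
qed

lemma op_aut_osum:
  assumes "op_aut n \<rho>" "finite P" "\<And>p. p \<in> P \<Longrightarrow> F p \<in> op_alg n"
  shows "\<rho> (\<lambda>v \<gamma>. \<Sum>p\<in>P. c p * F p v \<gamma>) = (\<lambda>v \<gamma>. \<Sum>p\<in>P. c p * \<rho> (F p) v \<gamma>)"
  using assms(2,3)
proof (induction P rule: finite_induct)
  case empty then show ?case using op_aut_zero[OF assms(1)] by (simp add: zop_def)
next
  case (insert x P)
  have e: "(\<lambda>v \<gamma>. \<Sum>p\<in>insert x P. c p * F p v \<gamma>) = addop (smop (c x) (F x)) (\<lambda>v \<gamma>. \<Sum>p\<in>P. c p * F p v \<gamma>)"
    using insert by (simp add: addop_def smop_def)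
  have "\<rho> (addop (smop (c x) (F x)) (\<lambda>v \<gamma>. \<Sum>p\<in>P. c p * F p v \<gamma>)) =
     addop (smop (c x) (\<rho> (F x))) (\<rho> (\<lambda>v \<gamma>. \<Sum>p\<in>P. c p * F p v \<gamma>))"
    using insert by (simp add: op_aut_add[OF assms(1)] op_aut_smult[OF assms(1)] op_alg_smult osum_in)
  then show ?case using insert e by (simp add: addop_def smop_def)
qed

lemma op_aut_fix_wop:
  assumes "op_aut n \<rho>" "\<And>g. g \<in> G \<Longrightarrow> \<rho> (wop n [g]) = wop n [g]" "G \<subseteq> gens n"
  shows "set w \<subseteq> G \<Longrightarrow> \<rho> (wop n w) = wop n w"
proof (induction w)
  case Nil then show ?case using op_aut_R[OF assms(1)] by simp
next
  case (Cons g w)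
  have e: "wop n (g # w) = wop n [g] \<circ> wop n w" using wop_append[of n "[g]" w] by (auto simp: fun_eq_iff)
  have w1: "wop n [g] \<in> op_alg n" by (rule op_alg_wop) (use Cons assms(3) in auto)
  have w2: "wop n w \<in> op_alg n" by (rule op_alg_wop) (use Cons assms(3) in auto)
  have r1: "\<rho> (wop n [g]) = wop n [g]" using assms(2) Cons.prems by simp
  have r2: "\<rho> (wop n w) = wop n w" using Cons by simp
  have "\<rho> (wop n (g # w)) = \<rho> (wop n [g]) \<circ> \<rho> (wop n w)" unfolding e by (rule op_aut_comp[OF assms(1) w1 w2])
  also have "\<dots> = wop n [g] \<circ> wop n w" by (simp only: r1 r2)
  finally show ?case by (simp only: e)
qed

lemma op_aut_fix_all:
  assumes "op_aut n \<rho>" "\<And>i. i \<in> {1..n} \<Longrightarrow> \<rho> (Xop n i) = Xop n i"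
    "\<And>i. i \<in> {1..n} \<Longrightarrow> \<rho> (Yop n i) = Yop n i" "a \<in> op_alg n"
  shows "\<rho> a = a"
proof -
  obtain f where f: "f \<in> ncP n" "a = rep_poly n f" using assms(4) unfolding op_alg_def by auto
  have S: "finite {w. f w \<noteq> 0}" "\<And>w. w \<in> {w. f w \<noteq> 0} \<Longrightarrow> set w \<subseteq> gens n"
    using f unfolding ncP_def by auto
  have fix1: "\<rho> (wop n [g]) = wop n [g]" if "g \<in> gens n" for g
    using that assms(2,3) by (cases g) (auto simp: gens_def Xop_R Yop_R)
  have fixw: "\<rho> (wop n w) = wop n w" if "w \<in> {w. f w \<noteq> 0}" for w
    by (rule op_aut_fix_wop[OF assms(1) fix1 order_refl S(2)[OF that]])
  have "\<rho> a = (\<lambda>v \<gamma>. \<Sum>w\<in>{w. f w \<noteq> 0}. f w * \<rho> (wop n w) v \<gamma>)"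
    unfolding f(2) rep_poly_def by (rule op_aut_osum[OF assms(1) S(1)]) (use S(2) in \<open>auto intro!: op_alg_wop\<close>)
  also have "\<dots> = a" unfolding f(2) rep_poly_def using fixw by simp
  finally show ?thesis .
qed

definition Sn_conj :: "nat \<Rightarrow> (('k::field) ncpoly set \<Rightarrow> 'k ncpoly set) \<Rightarrow> 'k op \<Rightarrow> 'k op" where
  "Sn_conj n \<sigma> a = rep_cls n (\<sigma> (cls_of n a))"

lemma Sn_conj_op_aut:
  fixes \<sigma> :: "('k::field) ncpoly set \<Rightarrow> 'k ncpoly set"
  assumes s: "Sn_aut n \<sigma>"
  shows "op_aut n (Sn_conj n \<sigma>)"
proof -
  have bs: "bij_betw \<sigma> (Sn n) (Sn n)" using s unfolding Sn_aut_def by auto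
  then have sin: "\<sigma> A \<in> Sn n" if "A \<in> Sn n" for A using that unfolding bij_betw_def by auto
  show ?thesis unfolding op_aut_def
  proof (intro conjI ballI allI)
    have "Sn_conj n \<sigma> = rep_cls n \<circ> (\<sigma> \<circ> inv_into (Sn n) (rep_cls n))"
      by (auto simp: Sn_conj_def cls_of_def)
    then show "bij_betw (Sn_conj n \<sigma>) (op_alg n) (op_alg n)"
      using bij_betw_trans[OF bij_betw_trans[OF bij_betw_inv_into[OF rep_cls_bij] bs] rep_cls_bij] by simp
  next
    fix a b :: "'k op" assume a: "a \<in> op_alg n" and b: "b \<in> op_alg n"
    show "Sn_conj n \<sigma> (addop a b) = addop (Sn_conj n \<sigma> a) (Sn_conj n \<sigma> b)"
      using s cls_of_in[OF a] cls_of_in[OF b] unfolding Sn_conj_def Sn_aut_def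
      by (simp add: cls_of_hom[OF a b] rep_cls_add sin)
    show "Sn_conj n \<sigma> (a \<circ> b) = Sn_conj n \<sigma> a \<circ> Sn_conj n \<sigma> b"
      using s cls_of_in[OF a] cls_of_in[OF b] unfolding Sn_conj_def Sn_aut_def
      by (simp add: cls_of_hom[OF a b] rep_cls_mult sin)
  next
    fix c and a :: "'k op" assume a: "a \<in> op_alg n"
    show "Sn_conj n \<sigma> (smop c a) = smop c (Sn_conj n \<sigma> a)"
      using s cls_of_in[OF a] unfolding Sn_conj_def Sn_aut_def
      by (simp add: cls_of_hom[OF a a] rep_cls_smult sin)
  next
    show "Sn_conj n \<sigma> (Rop n) = Rop n"
      using s unfolding Sn_conj_def Sn_aut_def by (simp add: cls_of_one rep_cls_one)
  qed
qed

section \<open>Units of the polynomial ring in commuting variables\<close>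

text \<open>Multi-indices are compared lexicographically (\<open>less_fun\<close>); this order is compatible with
  addition and total on admissible indices, so finite sets have a largest element.\<close>

lemma less_fun_add:
  "less_fun f g \<Longrightarrow> less_fun (\<lambda>i. f i + h i) (\<lambda>i. g i + (h i :: nat))"
  unfolding less_fun_def by auto

lemma less_fun_zero: "\<not> less_fun f (\<lambda>_. 0::nat)"
  unfolding less_fun_def by auto

lemma adm_tri:
  assumes "adm n f" "adm n g"
  shows "less_fun f g \<or> f = g \<or> less_fun g f"
proof (rule less_fun_trichotomy)
  have "{k. f k \<noteq> g k} \<subseteq> {1..n}"
  proof
    fix k assume "k \<in> {k. f k \<noteq> g k}"
    then show "k \<in> {1..n}" using assms unfolding adm_def by (cases "k \<in> {1..n}") auto
  qed
  then show "finite {k. f k \<noteq> g k}" by (rule finite_subset) simp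
qed

lemma lex_max:
  assumes "finite T" "T \<noteq> {}" "\<forall>x\<in>T. adm n x"
  shows "\<exists>m\<in>T. \<forall>x\<in>T. x = m \<or> less_fun x m"
  using assms
proof (induction T rule: finite_ne_induct)
  case (singleton x) then show ?case by auto
next
  case (insert x F)
  then obtain m where m: "m \<in> F" "\<forall>y\<in>F. y = m \<or> less_fun y m" by auto
  have ax: "adm n x" and am: "adm n m" using insert m by auto
  show ?case
  proof (cases "less_fun m x")
    case True
    have "\<forall>y\<in>insert x F. y = x \<or> less_fun y x"
    proof
      fix y assume "y \<in> insert x F"
      then consider "y = x" | "y = m" | "less_fun y m" using m by auto
      then show "y = x \<or> less_fun y x"
        by cases (use True less_fun_trans in blast)+
    qed
    then show ?thesis by blast
  next
    case False
    then have "x = m \<or> less_fun x m" using adm_tri[OF ax am] by auto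
    then have "\<forall>y\<in>insert x F. y = m \<or> less_fun y m" using m by auto
    then show ?thesis using m by blast
  qed
qed

text \<open>Convolution of two finitely supported coefficient families on multi-indices: the
  coefficients of the product of the commuting polynomials they describe.\<close>

definition conv :: "(nat \<Rightarrow> nat) set \<Rightarrow> ((nat \<Rightarrow> nat) \<Rightarrow> 'k) \<Rightarrow> (nat \<Rightarrow> nat) set \<Rightarrow>
    ((nat \<Rightarrow> nat) \<Rightarrow> 'k) \<Rightarrow> (nat \<Rightarrow> nat) \<Rightarrow> ('k::field)" where
  "conv S1 w1 S2 w2 \<gamma> = (\<Sum>\<mu>\<in>S1. \<Sum>\<nu>\<in>S2. if (\<lambda>i. \<mu> i + \<nu> i) = \<gamma> then w1 \<mu> * w2 \<nu> else 0)"

lemma conv_commute: "conv S1 w1 S2 w2 = conv S2 w2 S1 w1"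
  unfolding conv_def by (rule ext, subst sum.swap) (intro sum.cong refl, simp add: add.commute mult.commute)

lemma conv_leading:
  assumes S: "finite S1" "finite S2"
    and m1: "m1 \<in> S1" "\<And>\<mu>. \<mu> \<in> S1 \<Longrightarrow> w1 \<mu> \<noteq> 0 \<Longrightarrow> \<mu> = m1 \<or> less_fun \<mu> m1"
    and m2: "m2 \<in> S2" "\<And>\<nu>. \<nu> \<in> S2 \<Longrightarrow> w2 \<nu> \<noteq> 0 \<Longrightarrow> \<nu> = m2 \<or> less_fun \<nu> m2"
  shows "conv S1 w1 S2 w2 (\<lambda>i. m1 i + m2 i) = w1 m1 * (w2 m2 :: 'k::field)"
proof -
  let ?g = "\<lambda>i. m1 i + m2 i"
  have uniq: "\<mu> = m1 \<and> \<nu> = m2"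
    if "\<mu> \<in> S1" "\<nu> \<in> S2" "w1 \<mu> \<noteq> 0" "w2 \<nu> \<noteq> 0" "(\<lambda>i. \<mu> i + \<nu> i) = ?g" for \<mu> \<nu>
  proof (cases "\<mu> = m1")
    case True
    then show ?thesis using that(5) by (auto simp: fun_eq_iff)
  next
    case False
    then have "less_fun (\<lambda>i. \<mu> i + \<nu> i) (\<lambda>i. m1 i + \<nu> i)"
      using m1(2)[OF that(1,3)] less_fun_add by blast
    moreover have "(\<lambda>i. m1 i + \<nu> i) = ?g \<or> less_fun (\<lambda>i. m1 i + \<nu> i) ?g"
      using m2(2)[OF that(2,4)] less_fun_add[of \<nu> m2 m1] by (auto simp: add.commute)
    ultimately have "less_fun (\<lambda>i. \<mu> i + \<nu> i) ?g" using less_fun_trans by metis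
    then show ?thesis using that(5) less_fun_irrefl by metis
  qed
  have "conv S1 w1 S2 w2 ?g = (\<Sum>\<mu>\<in>S1. \<Sum>\<nu>\<in>S2. if \<mu> = m1 \<and> \<nu> = m2 then w1 m1 * w2 m2 else 0)"
    unfolding conv_def by (intro sum.cong refl) (use uniq in auto)
  also have "\<dots> = (\<Sum>\<mu>\<in>S1. if \<mu> = m1 then w1 m1 * w2 m2 else 0)"
    using S(2) m2(1) by (intro sum.cong refl) (auto simp: sum.delta')
  also have "\<dots> = w1 m1 * w2 m2" using S(1) m1(1) by (simp add: sum.delta')
  finally show ?thesis .
qed

text \<open>If the product of two commuting polynomials is \<open>1\<close>, both are constants: a convolution
  equal to \<open>\<delta>\<^sub>0\<close> forces the left factor to be supported at the zero index.\<close>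

lemma conv_unit_left:
  fixes w1 w2 :: "(nat \<Rightarrow> nat) \<Rightarrow> 'k::field"
  assumes S: "finite S1" "finite S2" "\<forall>\<mu>\<in>S1. adm n \<mu>" "\<forall>\<nu>\<in>S2. adm n \<nu>"
    and unit: "conv S1 w1 S2 w2 = delta vac"
  shows "\<forall>\<mu>\<in>S1. \<mu> \<noteq> vac \<longrightarrow> w1 \<mu> = 0"
proof -
  define T1 where "T1 = {\<mu>\<in>S1. w1 \<mu> \<noteq> 0}"
  define T2 where "T2 = {\<nu>\<in>S2. w2 \<nu> \<noteq> 0}"
  have fin: "finite T1" "finite T2" using S unfolding T1_def T2_def by auto
  have unit_vac: "conv S1 w1 S2 w2 vac = 1" using unit by (simp add: delta_def)
  have "T1 \<noteq> {}"
  proof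
    assume "T1 = {}"
    then have "conv S1 w1 S2 w2 vac = 0" unfolding T1_def conv_def by (auto intro!: sum.neutral)
    with unit_vac show False by simp
  qed
  moreover have "T2 \<noteq> {}"
  proof
    assume "T2 = {}"
    then have "conv S1 w1 S2 w2 vac = 0" unfolding T2_def conv_def by (auto intro!: sum.neutral)
    with unit_vac show False by simp
  qed
  moreover have "\<forall>x\<in>T1. adm n x" "\<forall>x\<in>T2. adm n x" using S(3,4) unfolding T1_def T2_def by auto
  ultimately obtain m1 m2 where m1: "m1 \<in> T1" "\<forall>x\<in>T1. x = m1 \<or> less_fun x m1"
    and m2: "m2 \<in> T2" "\<forall>x\<in>T2. x = m2 \<or> less_fun x m2"
    using lex_max[OF fin(1)] lex_max[OF fin(2)] by metis
  have "w1 m1 * w2 m2 = delta vac (\<lambda>i. m1 i + m2 i)"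
    using conv_leading[OF S(1,2), of m1 w1 m2 w2] m1 m2 unit unfolding T1_def T2_def by auto
  moreover have "w1 m1 * w2 m2 \<noteq> 0" using m1 m2 unfolding T1_def T2_def by auto
  ultimately have "m1 = vac" by (auto simp: delta_def fun_eq_iff split: if_splits)
  then show ?thesis using m1 less_fun_zero unfolding T1_def by blast
qed

lemma conv_unit_right:
  fixes w1 w2 :: "(nat \<Rightarrow> nat) \<Rightarrow> 'k::field"
  assumes "finite S1" "finite S2" "\<forall>\<mu>\<in>S1. adm n \<mu>" "\<forall>\<nu>\<in>S2. adm n \<nu>"
    and "conv S1 w1 S2 w2 = delta vac"
  shows "\<forall>\<nu>\<in>S2. \<nu> \<noteq> vac \<longrightarrow> w2 \<nu> = 0"
  using conv_unit_left[of S2 S1 n w2 w1] assms conv_commute by metis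

section \<open>The vacuum projector and operators annihilating the \<open>x\<close>'s or the \<open>y\<close>'s\<close>

text \<open>\<open>vac_proj_upto n k\<close> is \<open>(1 - x\<^sub>1y\<^sub>1)\<cdots>(1 - x\<^sub>ky\<^sub>k)\<close>, the projection onto indices vanishing
  on \<open>{1..k}\<close>; for \<open>k = n\<close> it is the projection \<open>E\<close> onto the vacuum \<open>\<delta>\<^sub>0\<close>.\<close>

definition vac_proj_upto :: "nat \<Rightarrow> nat \<Rightarrow> ('k::field) op" where
  "vac_proj_upto n k v = (\<lambda>\<gamma>. if adm n \<gamma> \<and> (\<forall>i\<in>{1..k}. \<gamma> i = 0) then v \<gamma> else 0)"

definition vac_proj :: "nat \<Rightarrow> ('k::field) op" where
  "vac_proj n = vac_proj_upto n n"

lemma vac_proj_formula: "vac_proj n v \<gamma> = (if \<gamma> = vac then v vac else 0)"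
proof -
  have "(adm n \<gamma> \<and> (\<forall>i\<in>{1..n}. \<gamma> i = 0)) = (\<gamma> = vac)"
    unfolding adm_def by (auto simp: fun_eq_iff)
  then show ?thesis unfolding vac_proj_def vac_proj_upto_def by auto
qed

lemma xy_vac_proj_upto:
  assumes "j = Suc k" "j \<in> {1..n}"
  shows "Xop n j (Yop n j (vac_proj_upto n k v)) \<gamma> =
    (if adm n \<gamma> \<and> 0 < \<gamma> j \<and> (\<forall>i\<in>{1..k}. \<gamma> i = 0) then v \<gamma> else 0)"
proof (cases "adm n \<gamma> \<and> 0 < \<gamma> j")
  case True
  let ?g = "\<gamma>(j := \<gamma> j - 1)"
  have g2: "?g(j := Suc (?g j)) = \<gamma>" using True by auto
  have a: "adm n ?g" using True assms by simp
  have c: "(\<forall>i\<in>{1..k}. \<gamma> i = 0) = (\<forall>i\<in>{1..k}. ?g i = 0)" using assms by auto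
  have "Xop n j (Yop n j (vac_proj_upto n k v)) \<gamma> = Yop n j (vac_proj_upto n k v) ?g" using True by (simp add: Xop_def)
  also have "\<dots> = vac_proj_upto n k v (?g(j := Suc (?g j)))" using a by (simp add: Yop_def)
  also have "\<dots> = vac_proj_upto n k v \<gamma>" by (simp only: g2)
  finally show ?thesis using True by (simp add: vac_proj_upto_def)
next
  case False
  then show ?thesis by (auto simp: Xop_def)
qed

lemma vac_proj_upto_step:
  assumes "Suc k \<in> {1..n}"
  shows "vac_proj_upto n k v \<gamma> = vac_proj_upto n (Suc k) v \<gamma> + Xop n (Suc k) (Yop n (Suc k) (vac_proj_upto n k v)) \<gamma>"
proof -
  have q: "(\<forall>i\<in>{1..Suc k}. \<gamma> i = 0) = ((\<forall>i\<in>{1..k}. \<gamma> i = 0) \<and> \<gamma> (Suc k) = 0)"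
    using atLeastAtMostSuc_conv[of 1 k] by auto
  show ?thesis
    apply (subst xy_vac_proj_upto[OF refl assms])
    unfolding vac_proj_upto_def q by auto
qed

lemma vac_proj_upto_in_op_alg: "k \<le> n \<Longrightarrow> (vac_proj_upto n k :: ('k::field) op) \<in> op_alg n"
proof (induction k)
  case 0
  have "vac_proj_upto n 0 = (Rop n :: 'k op)" by (auto simp: vac_proj_upto_def Rop_def fun_eq_iff)
  then show ?case using op_alg_R by simp
next
  case (Suc k)
  have j: "Suc k \<in> {1..n}" using Suc.prems by simp
  have "(vac_proj_upto n (Suc k) :: 'k op) = addop (vac_proj_upto n k) (smop (-1) (Xop n (Suc k) \<circ> (Yop n (Suc k) \<circ> vac_proj_upto n k)))"
    by (intro ext) (simp add: addop_def smop_def vac_proj_upto_step[OF j])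
  then show ?case using Suc j by (auto intro!: op_alg_add op_alg_smult op_alg_comp op_alg_X op_alg_Y)
qed

lemma vac_proj_in_op_alg: "vac_proj n \<in> op_alg n"
  unfolding vac_proj_def by (rule vac_proj_upto_in_op_alg) simp
lemma vac_proj_idem: "vac_proj n \<circ> vac_proj n = (vac_proj n :: ('k::field) op)"
  by (auto simp: fun_eq_iff vac_proj_formula)

lemma vac_proj_x: "i \<in> {1..n} \<Longrightarrow> (vac_proj n :: ('k::field) op) \<circ> Xop n i = zop"
  by (auto simp: fun_eq_iff vac_proj_formula Xop_def zop_def)

lemma y_vac_proj: "i \<in> {1..n} \<Longrightarrow> Yop n i \<circ> (vac_proj n :: ('k::field) op) = zop"
  by (auto simp: fun_eq_iff vac_proj_formula Yop_def zop_def)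

lemma vac_proj_nonzero: "vac_proj n \<noteq> (zop :: ('k::field) op)"
proof
  assume "vac_proj n = (zop :: 'k op)"
  then have "vac_proj n (delta vac) vac = (zop :: 'k op) (delta vac) vac" by simp
  then show False by (simp add: vac_proj_formula delta_def zop_def)
qed

text \<open>An element annihilated on the right by every \<open>x\<^sub>j\<close> only sees the vacuum component:
  telescoping \<open>1 = E + \<Sum>\<^sub>k (\<dots>) x\<^sub>k y\<^sub>k (\<dots>)\<close>.\<close>

lemma x_annihilator_factors:
  assumes a: "a \<in> op_alg n" and z: "\<And>j. j \<in> {1..n} \<Longrightarrow> a \<circ> Xop n j = zop"
  shows "a v \<gamma> = a (vac_proj n v) \<gamma>"
proof -
  have "k \<le> n \<Longrightarrow> a v \<gamma> = a (vac_proj_upto n k v) \<gamma>" for k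
  proof (induction k)
    case 0
    have "vac_proj_upto n 0 v = Rop n v" by (auto simp: vac_proj_upto_def Rop_def fun_eq_iff)
    then show ?case using op_alg_Rop[OF a] by simp
  next
    case (Suc k)
    have j: "Suc k \<in> {1..n}" using Suc.prems by simp
    have e: "vac_proj_upto n k v = (\<lambda>\<gamma>. vac_proj_upto n (Suc k) v \<gamma> + Xop n (Suc k) (Yop n (Suc k) (vac_proj_upto n k v)) \<gamma>)"
      by (intro ext) (rule vac_proj_upto_step[OF j])
    have "a (vac_proj_upto n k v) \<gamma> = a (vac_proj_upto n (Suc k) v) \<gamma> + a (Xop n (Suc k) (Yop n (Suc k) (vac_proj_upto n k v))) \<gamma>"
      by (subst e) (rule op_alg_add_vec[OF a])
    also have "a (Xop n (Suc k) (Yop n (Suc k) (vac_proj_upto n k v))) \<gamma> = 0"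
      using fun_cong[OF fun_cong[OF z[OF j], of "Yop n (Suc k) (vac_proj_upto n k v)"], of \<gamma>] by (simp add: zop_def)
    finally show ?case using Suc by simp
  qed
  then show ?thesis unfolding vac_proj_def by simp
qed

lemma x_annihilator_rank_one:
  assumes a: "a \<in> op_alg n" and z: "\<And>j. j \<in> {1..n} \<Longrightarrow> a \<circ> Xop n j = zop"
  shows "a v \<gamma> = v vac * a (delta vac) \<gamma>"
proof -
  have "vac_proj n v = (\<lambda>\<gamma>. v vac * delta vac \<gamma>)" by (auto simp: vac_proj_formula delta_def fun_eq_iff)
  then have "a (vac_proj n v) \<gamma> = a (\<lambda>\<gamma>. v vac * delta vac \<gamma>) \<gamma>" by simp
  also have "\<dots> = v vac * a (delta vac) \<gamma>" by (rule op_alg_smult_vec[OF a])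
  finally show ?thesis using x_annihilator_factors[OF a z] by simp
qed

lemma y_annihilator_range:
  assumes a: "a \<in> op_alg n" and z: "\<And>j. j \<in> {1..n} \<Longrightarrow> Yop n j \<circ> a = zop"
  shows "vac_proj n (a v) = a v"
proof -
  let ?u = "a v"
  have yz: "Yop n j ?u \<gamma> = 0" if "j \<in> {1..n}" for j \<gamma>
    using fun_cong[OF fun_cong[OF z[OF that], of v], of \<gamma>] by (simp add: zop_def)
  have "k \<le> n \<Longrightarrow> vac_proj_upto n k ?u = ?u" for k
  proof (induction k)
    case 0
    show ?case by (auto simp: vac_proj_upto_def fun_eq_iff op_alg_nadm[OF a])
  next
    case (Suc k)
    have j: "Suc k \<in> {1..n}" using Suc.prems by simp
    have "Xop n (Suc k) (Yop n (Suc k) (vac_proj_upto n k ?u)) \<gamma> = 0" for \<gamma>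
    proof (cases "adm n \<gamma> \<and> 0 < \<gamma> (Suc k)")
      case True
      let ?g = "\<gamma>(Suc k := \<gamma> (Suc k) - 1)"
      have "Yop n (Suc k) ?u ?g = ?u \<gamma>" using True j by (simp add: Yop_def)
      then have "?u \<gamma> = 0" using yz[OF j] by simp
      moreover have "Xop n (Suc k) (Yop n (Suc k) (vac_proj_upto n k ?u)) \<gamma> =
        (if adm n \<gamma> \<and> 0 < \<gamma> (Suc k) \<and> (\<forall>i\<in>{1..k}. \<gamma> i = 0) then ?u \<gamma> else 0)"
        by (rule xy_vac_proj_upto[OF refl j])
      ultimately show ?thesis by simp
    next
      case False then show ?thesis by (auto simp: Xop_def)
    qed
    then have hP: "vac_proj_upto n k ?u \<gamma> = vac_proj_upto n (Suc k) ?u \<gamma>" for \<gamma> using vac_proj_upto_step[OF j, of ?u \<gamma>] by simp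
    have "vac_proj_upto n (Suc k) ?u = vac_proj_upto n k ?u" by (intro ext) (rule hP[symmetric])
    also have "\<dots> = ?u" using Suc.IH Suc.prems by simp
    finally show ?case .
  qed
  then show ?thesis unfolding vac_proj_def by simp
qed

lemma xmono_formula:
  "adm n \<alpha> \<Longrightarrow> Mop n \<alpha> vac v \<gamma> = (if adm n \<gamma> \<and> (\<forall>i. \<alpha> i \<le> \<gamma> i) then v (\<lambda>i. \<gamma> i - \<alpha> i) else 0)"
  by (simp add: Mop_formula)

lemma ymono_formula: "adm n \<beta> \<Longrightarrow> Mop n vac \<beta> v \<gamma> = (if adm n \<gamma> then v (\<lambda>i. \<gamma> i + \<beta> i) else 0)"
  by (simp add: Mop_formula)

lemma shift_iff:
  assumes "adm n \<alpha>" "adm n \<beta>"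
  shows "(adm n \<gamma> \<and> (\<forall>i. \<alpha> i \<le> \<gamma> i) \<and> (\<lambda>i. \<gamma> i - \<alpha> i) = \<beta>) = ((\<lambda>i. \<alpha> i + \<beta> i) = \<gamma>)"
proof
  assume h: "adm n \<gamma> \<and> (\<forall>i. \<alpha> i \<le> \<gamma> i) \<and> (\<lambda>i. \<gamma> i - \<alpha> i) = \<beta>"
  show "(\<lambda>i. \<alpha> i + \<beta> i) = \<gamma>"
  proof
    fix i show "\<alpha> i + \<beta> i = \<gamma> i" using h fun_cong[of "\<lambda>i. \<gamma> i - \<alpha> i" \<beta> i] by auto
  qed
next
  assume h: "(\<lambda>i. \<alpha> i + \<beta> i) = \<gamma>"
  have "adm n \<gamma>" using assms h unfolding adm_def by auto
  then show "adm n \<gamma> \<and> (\<forall>i. \<alpha> i \<le> \<gamma> i) \<and> (\<lambda>i. \<gamma> i - \<alpha> i) = \<beta>" using h by auto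
qed

lemma xmono_vac: "adm n \<alpha> \<Longrightarrow> Mop n \<alpha> vac (vac_proj n v) \<gamma> = (if \<gamma> = \<alpha> then v vac else 0)"
  using shift_iff[of n \<alpha> vac \<gamma>] by (auto simp: xmono_formula vac_proj_formula)

lemma mono_delta_vac:
  assumes "adm n \<alpha>" "adm n \<beta>"
  shows "Mop n \<alpha> \<beta> (delta vac) \<gamma> = (if \<gamma> = \<alpha> \<and> \<beta> = vac then 1 else 0)"
proof -
  have "(adm n \<gamma> \<and> (\<forall>i. \<alpha> i \<le> \<gamma> i) \<and> (\<lambda>i. \<gamma> i - \<alpha> i + \<beta> i) = vac) = (\<gamma> = \<alpha> \<and> \<beta> = vac)"
  proof
    assume h: "adm n \<gamma> \<and> (\<forall>i. \<alpha> i \<le> \<gamma> i) \<and> (\<lambda>i. \<gamma> i - \<alpha> i + \<beta> i) = vac"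
    then have e: "\<gamma> i - \<alpha> i + \<beta> i = 0" for i by (metis (mono_tags))
    then show "\<gamma> = \<alpha> \<and> \<beta> = vac" using h by (auto simp: fun_eq_iff) (metis add_is_0 e le_antisym diff_is_0_eq)+
  qed (use assms in auto)
  then show ?thesis using assms by (auto simp: Mop_formula delta_def)
qed

lemma mono_at_vac:
  assumes "adm n \<alpha>" "adm n \<beta>"
  shows "Mop n \<alpha> \<beta> v vac = (if \<alpha> = vac then v \<beta> else 0)"
proof -
  have "(\<forall>i. \<alpha> i \<le> 0) = (\<alpha> = vac)" by (auto simp: fun_eq_iff)
  then show ?thesis using assms by (auto simp: Mop_formula)
qed

definition xpoly_op :: "nat \<Rightarrow> (nat \<Rightarrow> nat) set \<Rightarrow> ((nat \<Rightarrow> nat) \<Rightarrow> 'k) \<Rightarrow> ('k::field) op" where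
  "xpoly_op n Q c = (\<lambda>v \<gamma>. \<Sum>\<alpha>\<in>Q. c \<alpha> * Mop n \<alpha> vac v \<gamma>)"

definition ypoly_op :: "nat \<Rightarrow> (nat \<Rightarrow> nat) set \<Rightarrow> ((nat \<Rightarrow> nat) \<Rightarrow> 'k) \<Rightarrow> ('k::field) op" where
  "ypoly_op n Q c = (\<lambda>v \<gamma>. \<Sum>\<beta>\<in>Q. c \<beta> * Mop n vac \<beta> v \<gamma>)"

lemma xpoly_op_in_op_alg: "finite Q \<Longrightarrow> xpoly_op n Q c \<in> op_alg n"
  unfolding xpoly_op_def by (rule osum_in) (auto intro: op_alg_Mop)

lemma ypoly_op_in_op_alg: "finite Q \<Longrightarrow> ypoly_op n Q c \<in> op_alg n"
  unfolding ypoly_op_def by (rule osum_in) (auto intro: op_alg_Mop)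

lemma xpoly_vac:
  assumes "finite Q" "\<forall>\<alpha>\<in>Q. adm n \<alpha>"
  shows "xpoly_op n Q c (vac_proj n v) \<gamma> = v vac * (if \<gamma> \<in> Q then c \<gamma> else 0)"
proof -
  have "xpoly_op n Q c (vac_proj n v) \<gamma> = (\<Sum>\<alpha>\<in>Q. if \<gamma> = \<alpha> then c \<gamma> * v vac else 0)"
    unfolding xpoly_op_def using assms(2) by (intro sum.cong refl) (auto simp: xmono_vac)
  then show ?thesis using assms(1) by (simp add: sum.delta)
qed

lemma vac_ypoly:
  assumes "\<forall>\<beta>\<in>Q. adm n \<beta>"
  shows "vac_proj n (ypoly_op n Q c v) \<gamma> = (if \<gamma> = vac then (\<Sum>\<beta>\<in>Q. c \<beta> * v \<beta>) else 0)"
  using assms by (auto simp: vac_proj_formula ypoly_op_def mono_at_vac intro!: sum.cong)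

lemma op_alg_vac_support:
  assumes "(a::'k::field op) \<in> op_alg n"
  shows "\<exists>Q. finite Q \<and> (\<forall>\<alpha>\<in>Q. adm n \<alpha>) \<and> (\<forall>\<gamma>. \<gamma> \<notin> Q \<longrightarrow> a (delta vac) \<gamma> = 0)"
proof -
  obtain P c where P: "finite P" "\<forall>p\<in>P. adm n (fst p) \<and> adm n (snd p)"
    and e: "a = (\<lambda>v \<gamma>. \<Sum>p\<in>P. c p * Mop n (fst p) (snd p) v \<gamma>)"
    using op_alg_nf[OF assms] by blast
  have "a (delta vac) \<gamma> = 0" if "\<gamma> \<notin> fst ` P" for \<gamma>
    unfolding e using P that by (intro sum.neutral) (auto simp: mono_delta_vac)
  then show ?thesis using P by blast
qed

lemma op_alg_vac_functional:
  assumes "(a::'k::field op) \<in> op_alg n"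
  shows "\<exists>Q c. finite Q \<and> (\<forall>\<beta>\<in>Q. adm n \<beta>) \<and> (\<forall>v. a v vac = (\<Sum>\<beta>\<in>Q. c \<beta> * v \<beta>))"
proof -
  obtain P c where P: "finite P" "\<forall>p\<in>P. adm n (fst p) \<and> adm n (snd p)"
    and e: "a = (\<lambda>v \<gamma>. \<Sum>p\<in>P. c p * Mop n (fst p) (snd p) v \<gamma>)"
    using op_alg_nf[OF assms] by blast
  define c' where "c' p = (if fst p = vac then c p else 0)" for p
  have f: "a v vac = (\<Sum>\<beta>\<in>snd ` P. (\<Sum>p\<in>{p\<in>P. snd p = \<beta>}. c' p) * v \<beta>)" for v
  proof -
    have "c p * Mop n (fst p) (snd p) v vac = c' p * v (snd p)" if "p \<in> P" for p
      using P(2) that by (simp add: mono_at_vac c'_def)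
    then have "a v vac = (\<Sum>p\<in>P. c' p * v (snd p))"
      unfolding e by (intro sum.cong) simp_all
    also have "\<dots> = (\<Sum>\<beta>\<in>snd ` P. (\<Sum>p\<in>{p\<in>P. snd p = \<beta>}. c' p) * v \<beta>)"
      by (rule sum_regroup[OF P(1)])
    finally show ?thesis .
  qed
  show ?thesis
    by (intro exI[of _ "snd ` P"] exI[of _ "\<lambda>\<beta>. \<Sum>p\<in>{p\<in>P. snd p = \<beta>}. c' p"]) (use P f in auto)
qed

lemma x_annihilator_form:
  assumes a: "(a::'k::field op) \<in> op_alg n" and z: "\<And>j. j \<in> {1..n} \<Longrightarrow> a \<circ> Xop n j = zop"
  shows "\<exists>Q c. finite Q \<and> (\<forall>\<alpha>\<in>Q. adm n \<alpha>) \<and> a = xpoly_op n Q c \<circ> vac_proj n"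
proof -
  obtain Q where Q: "finite Q" "\<forall>\<alpha>\<in>Q. adm n \<alpha>" and out: "\<And>\<gamma>. \<gamma> \<notin> Q \<Longrightarrow> a (delta vac) \<gamma> = 0"
    using op_alg_vac_support[OF a] by blast
  have "a v \<gamma> = xpoly_op n Q (a (delta vac)) (vac_proj n v) \<gamma>" for v \<gamma>
  proof -
    have "a v \<gamma> = v vac * a (delta vac) \<gamma>" by (rule x_annihilator_rank_one[OF a z])
    then show ?thesis by (cases "\<gamma> \<in> Q") (simp_all add: xpoly_vac[OF Q] out)
  qed
  then have "a = xpoly_op n Q (a (delta vac)) \<circ> vac_proj n" by (intro ext) simp
  then show ?thesis using Q by blast
qed

lemma y_annihilator_form:
  assumes a: "(a::'k::field op) \<in> op_alg n" and z: "\<And>j. j \<in> {1..n} \<Longrightarrow> Yop n j \<circ> a = zop"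
  shows "\<exists>Q c. finite Q \<and> (\<forall>\<beta>\<in>Q. adm n \<beta>) \<and> a = vac_proj n \<circ> ypoly_op n Q c"
proof -
  obtain Q c where Q: "finite Q" "\<forall>\<beta>\<in>Q. adm n \<beta>" and f: "\<And>v. a v vac = (\<Sum>\<beta>\<in>Q. c \<beta> * v \<beta>)"
    using op_alg_vac_functional[OF a] by blast
  have "a v \<gamma> = vac_proj n (ypoly_op n Q c v) \<gamma>" for v \<gamma>
  proof -
    have "a v \<gamma> = vac_proj n (a v) \<gamma>" using y_annihilator_range[OF a z] by simp
    also have "\<dots> = (if \<gamma> = vac then a v vac else 0)" by (rule vac_proj_formula)
    also have "\<dots> = vac_proj n (ypoly_op n Q c v) \<gamma>" by (simp add: f vac_ypoly[OF Q(2)])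
    finally show ?thesis .
  qed
  then have "a = vac_proj n \<circ> ypoly_op n Q c" by (intro ext) simp
  then show ?thesis using Q by blast
qed

lemma xpoly_xpoly_vac:
  assumes Q1: "finite Q1" "\<forall>\<alpha>\<in>Q1. adm n \<alpha>" and Q2: "finite Q2" "\<forall>\<alpha>\<in>Q2. adm n \<alpha>"
  shows "xpoly_op n Q1 c1 (xpoly_op n Q2 c2 (vac_proj n (delta vac))) \<gamma> = (conv Q1 c1 Q2 c2 \<gamma> :: 'k::field)"
proof -
  have inner: "xpoly_op n Q2 c2 (vac_proj n (delta vac)) = (\<lambda>\<gamma>. \<Sum>\<nu>\<in>Q2. if \<nu> = \<gamma> then c2 \<nu> else 0)"
    using Q2(1) by (intro ext) (simp add: xpoly_vac[OF Q2] delta_def sum.delta)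
  have "c1 \<mu> * Mop n \<mu> vac (\<lambda>\<gamma>. \<Sum>\<nu>\<in>Q2. if \<nu> = \<gamma> then c2 \<nu> else 0) \<gamma>
      = (\<Sum>\<nu>\<in>Q2. if (\<lambda>i. \<mu> i + \<nu> i) = \<gamma> then c1 \<mu> * c2 \<nu> else 0)" if "\<mu> \<in> Q1" for \<mu>
  proof -
    have "c1 \<mu> * Mop n \<mu> vac (\<lambda>\<gamma>. \<Sum>\<nu>\<in>Q2. if \<nu> = \<gamma> then c2 \<nu> else 0) \<gamma>
        = (\<Sum>\<nu>\<in>Q2. if adm n \<gamma> \<and> (\<forall>i. \<mu> i \<le> \<gamma> i) \<and> (\<lambda>i. \<gamma> i - \<mu> i) = \<nu> then c1 \<mu> * c2 \<nu> else 0)"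
    proof (cases "adm n \<gamma> \<and> (\<forall>i. \<mu> i \<le> \<gamma> i)")
      case True
      then show ?thesis using Q1(2) that by (auto simp: xmono_formula sum_distrib_left intro!: sum.cong)
    next
      case False
      then have "Mop n \<mu> vac u \<gamma> = 0" for u :: "'k vec" using Q1(2) that by (auto simp: xmono_formula)
      moreover have "(\<Sum>\<nu>\<in>Q2. if adm n \<gamma> \<and> (\<forall>i. \<mu> i \<le> \<gamma> i) \<and> (\<lambda>i. \<gamma> i - \<mu> i) = \<nu>
          then c1 \<mu> * c2 \<nu> else 0) = 0"
        using False by (intro sum.neutral) auto
      ultimately show ?thesis by simp
    qed
    also have "\<dots> = (\<Sum>\<nu>\<in>Q2. if (\<lambda>i. \<mu> i + \<nu> i) = \<gamma> then c1 \<mu> * c2 \<nu> else 0)"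
      using Q1(2) Q2(2) that shift_iff[of n \<mu> _ \<gamma>] by (intro sum.cong refl) auto
    finally show ?thesis .
  qed
  then show ?thesis unfolding inner unfolding conv_def xpoly_op_def by (intro sum.cong refl) auto
qed

lemma ypoly_ypoly_vac:
  assumes Q1: "\<forall>\<beta>\<in>Q1. adm n \<beta>" and Q2: "\<forall>\<beta>\<in>Q2. adm n \<beta>"
  shows "vac_proj n (ypoly_op n Q2 c2 (ypoly_op n Q1 c1 (delta \<gamma>))) vac = (conv Q2 c2 Q1 c1 \<gamma> :: 'k::field)"
proof -
  have "ypoly_op n Q1 c1 (delta \<gamma>) \<nu> = (\<Sum>\<mu>\<in>Q1. if (\<lambda>i. \<nu> i + \<mu> i) = \<gamma> then c1 \<mu> else 0)"
    if "adm n \<nu>" for \<nu>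
    unfolding ypoly_op_def using Q1 that by (auto simp: ymono_formula delta_def intro!: sum.cong)
  then show ?thesis
    using Q2 by (auto simp: vac_ypoly[OF Q2] conv_def sum_distrib_left if_distrib intro!: sum.cong cong: if_cong)
qed

section \<open>Automorphisms fixing all \<open>x\<^sub>i\<close> or all \<open>y\<^sub>i\<close>\<close>

lemma ord_wordX_setX: "set (ord_word Xg m \<alpha>) \<subseteq> Xg ` {1..m}"
  and ord_wordY_setY: "set (ord_word Yg m \<alpha>) \<subseteq> Yg ` {1..m}"
  by (induction m) auto

lemma Mop_fix:
  fixes \<rho> :: "('k::field) op \<Rightarrow> 'k op"
  assumes r: "op_aut n \<rho>" and fx: "\<And>i. i \<in> {1..n} \<Longrightarrow> \<rho> (Xop n i) = Xop n i"
  shows "\<rho> (Mop n \<alpha> vac) = Mop n \<alpha> vac"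
proof -
  have "(Mop n \<alpha> vac :: 'k op) = wop n (ord_word Xg n \<alpha>)" unfolding Mop_def by simp
  moreover have "\<rho> (wop n (ord_word Xg n \<alpha>)) = wop n (ord_word Xg n \<alpha>)"
  proof (rule op_aut_fix_wop[OF r _ _ ord_wordX_setX])
    fix g assume "g \<in> Xg ` {1..n}"
    then obtain i where i: "i \<in> {1..n}" "g = Xg i" by auto
    show "\<rho> (wop n [g]) = wop n [g]" by (simp only: i(2) wop_X[OF i(1)] fx[OF i(1)])
  qed auto
  ultimately show ?thesis by simp
qed

lemma MopY_fix:
  fixes \<rho> :: "('k::field) op \<Rightarrow> 'k op"
  assumes r: "op_aut n \<rho>" and fy: "\<And>i. i \<in> {1..n} \<Longrightarrow> \<rho> (Yop n i) = Yop n i"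
  shows "\<rho> (Mop n vac \<beta>) = Mop n vac \<beta>"
proof -
  have "(Mop n vac \<beta> :: 'k op) = wop n (ord_word Yg n \<beta>)" unfolding Mop_def by simp
  moreover have "\<rho> (wop n (ord_word Yg n \<beta>)) = wop n (ord_word Yg n \<beta>)"
  proof (rule op_aut_fix_wop[OF r _ _ ord_wordY_setY])
    fix g assume "g \<in> Yg ` {1..n}"
    then obtain i where i: "i \<in> {1..n}" "g = Yg i" by auto
    show "\<rho> (wop n [g]) = wop n [g]" by (simp only: i(2) wop_Y[OF i(1)] fy[OF i(1)])
  qed auto
  ultimately show ?thesis by simp
qed

lemma xpoly_op_fix:
  fixes \<rho> :: "('k::field) op \<Rightarrow> 'k op"
  assumes r: "op_aut n \<rho>" and fx: "\<And>i. i \<in> {1..n} \<Longrightarrow> \<rho> (Xop n i) = Xop n i" and Q: "finite Q"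
  shows "\<rho> (xpoly_op n Q c) = xpoly_op n Q c"
proof -
  have "\<rho> (Mop n \<alpha> vac) = Mop n \<alpha> vac" for \<alpha> by (rule Mop_fix[OF r fx])
  then show ?thesis unfolding xpoly_op_def by (subst op_aut_osum[OF r Q]) (auto intro: op_alg_Mop)
qed

lemma ypoly_op_fix:
  fixes \<rho> :: "('k::field) op \<Rightarrow> 'k op"
  assumes r: "op_aut n \<rho>" and fy: "\<And>i. i \<in> {1..n} \<Longrightarrow> \<rho> (Yop n i) = Yop n i" and Q: "finite Q"
  shows "\<rho> (ypoly_op n Q c) = ypoly_op n Q c"
proof -
  have "\<rho> (Mop n vac \<beta>) = Mop n vac \<beta>" for \<beta> by (rule MopY_fix[OF r fy])
  then show ?thesis unfolding ypoly_op_def by (subst op_aut_osum[OF r Q]) (auto intro: op_alg_Mop)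
qed

lemma op_aut_fix_x_annihilates:
  assumes r: "op_aut n \<rho>" and fx: "\<And>i. i \<in> {1..n} \<Longrightarrow> \<rho> (Xop n i) = Xop n i" and i: "i \<in> {1..n}"
  shows "\<rho> (vac_proj n) \<circ> Xop n i = (zop :: ('k::field) op)"
proof -
  have "\<rho> (vac_proj n) \<circ> Xop n i = \<rho> (vac_proj n) \<circ> \<rho> (Xop n i)" using fx[OF i] by simp
  also have "\<dots> = \<rho> (vac_proj n \<circ> Xop n i)" using op_aut_comp[OF r vac_proj_in_op_alg op_alg_X[OF i]] by simp
  also have "\<dots> = zop" by (simp only: vac_proj_x[OF i] op_aut_zero[OF r])
  finally show ?thesis .
qed

lemma op_aut_fix_y_annihilates:
  assumes r: "op_aut n \<rho>" and fy: "\<And>i. i \<in> {1..n} \<Longrightarrow> \<rho> (Yop n i) = Yop n i" and i: "i \<in> {1..n}"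
  shows "Yop n i \<circ> \<rho> (vac_proj n) = (zop :: ('k::field) op)"
proof -
  have "Yop n i \<circ> \<rho> (vac_proj n) = \<rho> (Yop n i) \<circ> \<rho> (vac_proj n)" using fy[OF i] by simp
  also have "\<dots> = \<rho> (Yop n i \<circ> vac_proj n)" using op_aut_comp[OF r op_alg_Y[OF i] vac_proj_in_op_alg] by simp
  also have "\<dots> = zop" by (simp only: y_vac_proj[OF i] op_aut_zero[OF r])
  finally show ?thesis .
qed

text \<open>If an automorphism sends \<open>E\<close> to a multiple of itself, the multiple is \<open>1\<close>: it is
  idempotent, and nonzero since \<open>E \<noteq> 0\<close>.\<close>

lemma op_aut_vac_proj_scalar:
  assumes r: "op_aut n \<rho>" and e: "\<rho> (vac_proj n) = smop k (vac_proj n :: ('k::field) op)"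
  shows "\<rho> (vac_proj n) = vac_proj n"
proof -
  have "smop k (vac_proj n) = smop k (vac_proj n) \<circ> (smop k (vac_proj n) :: 'k op)"
    using op_aut_comp[OF r vac_proj_in_op_alg vac_proj_in_op_alg] vac_proj_idem e by metis
  then have "smop k (vac_proj n) (delta vac) vac = (smop k (vac_proj n) \<circ> smop k (vac_proj n)) (delta vac) vac"
    by simp
  then have kk: "k * (k - 1) = 0" by (simp add: smop_def vac_proj_formula delta_def algebra_simps)
  have "k \<noteq> 0"
  proof
    assume "k = 0"
    then have "\<rho> (vac_proj n) = \<rho> zop" using e op_aut_zero[OF r] by (simp add: smop_def zop_def)
    then have "vac_proj n = (zop :: 'k op)" by (rule op_aut_inj[OF r vac_proj_in_op_alg op_alg_zero])
    with vac_proj_nonzero show False by blast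
  qed
  with kk have "k = 1" by simp
  then show ?thesis using e by (simp add: smop_def)
qed

lemma xpoly_unit_vac:
  assumes Q1: "finite Q1" "\<forall>\<alpha>\<in>Q1. adm n \<alpha>" and Q2: "finite Q2" "\<forall>\<alpha>\<in>Q2. adm n \<alpha>"
    and E: "vac_proj n = xpoly_op n Q1 c1 \<circ> (xpoly_op n Q2 c2 \<circ> vac_proj n)"
  shows "xpoly_op n Q2 c2 \<circ> vac_proj n = smop (if vac \<in> Q2 then c2 vac else 0) (vac_proj n :: ('k::field) op)"
proof -
  have "conv Q1 c1 Q2 c2 = (delta vac :: 'k vec)"
  proof
    fix \<gamma>
    have "conv Q1 c1 Q2 c2 \<gamma> = xpoly_op n Q1 c1 (xpoly_op n Q2 c2 (vac_proj n (delta vac))) \<gamma>"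
      by (rule xpoly_xpoly_vac[OF Q1 Q2, symmetric])
    also have "\<dots> = vac_proj n (delta vac) \<gamma>" using fun_cong[OF fun_cong[OF E, of "delta vac"], of \<gamma>] by simp
    also have "\<dots> = delta vac \<gamma>" by (simp add: vac_proj_formula delta_def)
    finally show "conv Q1 c1 Q2 c2 \<gamma> = delta vac \<gamma>" .
  qed
  then have "\<forall>\<nu>\<in>Q2. \<nu> \<noteq> vac \<longrightarrow> c2 \<nu> = 0" by (rule conv_unit_right[OF Q1(1) Q2(1) Q1(2) Q2(2)])
  then show ?thesis
    by (intro ext) (auto simp: xpoly_vac[OF Q2] smop_def vac_proj_formula)
qed

lemma ypoly_unit_vac:
  assumes Q1: "finite Q1" "\<forall>\<beta>\<in>Q1. adm n \<beta>" and Q2: "finite Q2" "\<forall>\<beta>\<in>Q2. adm n \<beta>"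
    and E: "vac_proj n = (vac_proj n \<circ> ypoly_op n Q2 c2) \<circ> ypoly_op n Q1 c1"
  shows "vac_proj n \<circ> ypoly_op n Q2 c2 = smop (if vac \<in> Q2 then c2 vac else 0) (vac_proj n :: ('k::field) op)"
proof -
  have "conv Q2 c2 Q1 c1 = (delta vac :: 'k vec)"
  proof
    fix \<gamma>
    have "conv Q2 c2 Q1 c1 \<gamma> = vac_proj n (ypoly_op n Q2 c2 (ypoly_op n Q1 c1 (delta \<gamma>))) vac"
      by (rule ypoly_ypoly_vac[OF Q1(2) Q2(2), symmetric])
    also have "\<dots> = vac_proj n (delta \<gamma>) vac" using fun_cong[OF fun_cong[OF E, of "delta \<gamma>"], of vac] by simp
    also have "\<dots> = delta vac \<gamma>" by (simp add: vac_proj_formula delta_def)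
    finally show "conv Q2 c2 Q1 c1 \<gamma> = delta vac \<gamma>" .
  qed
  then have c2: "\<forall>\<beta>\<in>Q2. \<beta> \<noteq> vac \<longrightarrow> c2 \<beta> = 0" by (rule conv_unit_left[OF Q2(1) Q1(1) Q2(2) Q1(2)])
  show ?thesis
  proof (intro ext)
    fix v :: "'k vec" and \<gamma>
    have "(\<Sum>\<beta>\<in>Q2. c2 \<beta> * v \<beta>) = (\<Sum>\<beta>\<in>Q2. if \<beta> = vac then c2 vac * v vac else 0)"
      using c2 by (intro sum.cong) auto
    then have "(vac_proj n \<circ> ypoly_op n Q2 c2) v \<gamma> = (if \<gamma> = vac then (if vac \<in> Q2 then c2 vac else 0) * v vac else 0)"
      using Q2(1) by (simp add: vac_ypoly[OF Q2(2)] sum.delta)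
    then show "(vac_proj n \<circ> ypoly_op n Q2 c2) v \<gamma> = smop (if vac \<in> Q2 then c2 vac else 0) (vac_proj n) v \<gamma>"
      by (simp add: smop_def vac_proj_formula)
  qed
qed

text \<open>An automorphism fixing the \<open>x\<^sub>i\<close> whose inverse also fixes them fixes \<open>E\<close>: both send \<open>E\<close>
  to some \<open>p(x) E\<close>, and these compose to \<open>E\<close>.\<close>

lemma op_aut_fix_x_vac_proj:
  fixes \<rho> \<rho>' :: "('k::field) op \<Rightarrow> 'k op"
  assumes r: "op_aut n \<rho>" and r': "op_aut n \<rho>'" and inv: "\<rho> (\<rho>' (vac_proj n)) = vac_proj n"
    and fx: "\<And>i. i \<in> {1..n} \<Longrightarrow> \<rho> (Xop n i) = Xop n i"
    and fx': "\<And>i. i \<in> {1..n} \<Longrightarrow> \<rho>' (Xop n i) = Xop n i"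
  shows "\<rho> (vac_proj n) = vac_proj n"
proof -
  obtain Q1 c1 where Q1: "finite Q1" "\<forall>\<alpha>\<in>Q1. adm n \<alpha>" and b: "\<rho>' (vac_proj n) = xpoly_op n Q1 c1 \<circ> vac_proj n"
    using x_annihilator_form[OF op_aut_in[OF r' vac_proj_in_op_alg] op_aut_fix_x_annihilates[OF r' fx']] by blast
  obtain Q2 c2 where Q2: "finite Q2" "\<forall>\<alpha>\<in>Q2. adm n \<alpha>" and e: "\<rho> (vac_proj n) = xpoly_op n Q2 c2 \<circ> vac_proj n"
    using x_annihilator_form[OF op_aut_in[OF r vac_proj_in_op_alg] op_aut_fix_x_annihilates[OF r fx]] by blast
  have "vac_proj n = \<rho> (xpoly_op n Q1 c1 \<circ> vac_proj n)" using inv b by simp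
  also have "\<dots> = \<rho> (xpoly_op n Q1 c1) \<circ> \<rho> (vac_proj n)"
    by (rule op_aut_comp[OF r xpoly_op_in_op_alg[OF Q1(1)] vac_proj_in_op_alg])
  also have "\<dots> = xpoly_op n Q1 c1 \<circ> (xpoly_op n Q2 c2 \<circ> vac_proj n)" using xpoly_op_fix[OF r fx Q1(1)] e by simp
  finally have "xpoly_op n Q2 c2 \<circ> vac_proj n = smop (if vac \<in> Q2 then c2 vac else 0) (vac_proj n)"
    by (rule xpoly_unit_vac[OF Q1 Q2])
  then have "\<rho> (vac_proj n) = smop (if vac \<in> Q2 then c2 vac else 0) (vac_proj n)" using e by simp
  then show ?thesis by (rule op_aut_vac_proj_scalar[OF r])
qed

lemma op_aut_fix_y_vac_proj:
  fixes \<rho> \<rho>' :: "('k::field) op \<Rightarrow> 'k op"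
  assumes r: "op_aut n \<rho>" and r': "op_aut n \<rho>'" and inv: "\<rho> (\<rho>' (vac_proj n)) = vac_proj n"
    and fy: "\<And>i. i \<in> {1..n} \<Longrightarrow> \<rho> (Yop n i) = Yop n i"
    and fy': "\<And>i. i \<in> {1..n} \<Longrightarrow> \<rho>' (Yop n i) = Yop n i"
  shows "\<rho> (vac_proj n) = vac_proj n"
proof -
  obtain Q1 c1 where Q1: "finite Q1" "\<forall>\<beta>\<in>Q1. adm n \<beta>" and b: "\<rho>' (vac_proj n) = vac_proj n \<circ> ypoly_op n Q1 c1"
    using y_annihilator_form[OF op_aut_in[OF r' vac_proj_in_op_alg] op_aut_fix_y_annihilates[OF r' fy']] by blast
  obtain Q2 c2 where Q2: "finite Q2" "\<forall>\<beta>\<in>Q2. adm n \<beta>" and e: "\<rho> (vac_proj n) = vac_proj n \<circ> ypoly_op n Q2 c2"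
    using y_annihilator_form[OF op_aut_in[OF r vac_proj_in_op_alg] op_aut_fix_y_annihilates[OF r fy]] by blast
  have "vac_proj n = \<rho> (vac_proj n \<circ> ypoly_op n Q1 c1)" using inv b by simp
  also have "\<dots> = \<rho> (vac_proj n) \<circ> \<rho> (ypoly_op n Q1 c1)"
    by (rule op_aut_comp[OF r vac_proj_in_op_alg ypoly_op_in_op_alg[OF Q1(1)]])
  also have "\<dots> = (vac_proj n \<circ> ypoly_op n Q2 c2) \<circ> ypoly_op n Q1 c1" using ypoly_op_fix[OF r fy Q1(1)] e by simp
  finally have "vac_proj n \<circ> ypoly_op n Q2 c2 = smop (if vac \<in> Q2 then c2 vac else 0) (vac_proj n)"
    by (rule ypoly_unit_vac[OF Q1 Q2])
  then have "\<rho> (vac_proj n) = smop (if vac \<in> Q2 then c2 vac else 0) (vac_proj n)" using e by simp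
  then show ?thesis by (rule op_aut_vac_proj_scalar[OF r])
qed

lemma y_xmono_vac_proj:
  assumes a: "adm n \<alpha>" and j: "j \<in> {1..n}"
  shows "Yop n j \<circ> (Mop n \<alpha> vac \<circ> vac_proj n) =
    (if 0 < \<alpha> j then Mop n (\<alpha>(j := \<alpha> j - 1)) vac \<circ> vac_proj n else (zop :: ('k::field) op))"
proof (intro ext)
  fix v :: "'k vec" and \<gamma>
  have a': "adm n (\<alpha>(j := \<alpha> j - 1))" using a j by simp
  have shift: "(\<gamma>(j := Suc (\<gamma> j)) = \<alpha>) = (0 < \<alpha> j \<and> \<gamma> = \<alpha>(j := \<alpha> j - 1))"
    by (auto simp: fun_eq_iff split: if_splits)
  have "\<not> adm n \<gamma> \<Longrightarrow> \<gamma> \<noteq> \<alpha>(j := \<alpha> j - 1)" using a' by auto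
  then show "(Yop n j \<circ> (Mop n \<alpha> vac \<circ> vac_proj n)) v \<gamma> =
      (if 0 < \<alpha> j then Mop n (\<alpha>(j := \<alpha> j - 1)) vac \<circ> vac_proj n else zop) v \<gamma>"
    using a a' j shift by (auto simp: Yop_def xmono_vac zop_def)
qed

lemma vac_proj_ymono_x:
  assumes b: "adm n \<beta>" and j: "j \<in> {1..n}"
  shows "(vac_proj n \<circ> Mop n vac \<beta>) \<circ> Xop n j =
    (if 0 < \<beta> j then vac_proj n \<circ> Mop n vac (\<beta>(j := \<beta> j - 1)) else (zop :: ('k::field) op))"
proof -
  have b': "adm n (\<beta>(j := \<beta> j - 1))" using b j by simp
  show ?thesis using b b' j by (intro ext) (simp add: vac_proj_formula ymono_formula Xop_def zop_def fun_upd_def)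
qed

text \<open>Key step: an automorphism fixing all \<open>x\<^sub>i\<close> and \<open>E\<close> fixes every \<open>x\<^sup>\<alpha> E\<close>, hence
  \<open>\<rho>(y\<^sub>j) x\<^sup>\<alpha> E = \<rho>(y\<^sub>j x\<^sup>\<alpha> E) = y\<^sub>j x\<^sup>\<alpha> E\<close>; evaluating at the vacuum gives agreement on every
  basis vector \<open>\<delta>\<^sub>\<alpha>\<close>.\<close>

lemma op_aut_fix_x_vac_fix_y:
  fixes \<rho> :: "('k::field) op \<Rightarrow> 'k op"
  assumes r: "op_aut n \<rho>" and fx: "\<And>i. i \<in> {1..n} \<Longrightarrow> \<rho> (Xop n i) = Xop n i"
    and rE: "\<rho> (vac_proj n) = vac_proj n" and j: "j \<in> {1..n}"
  shows "\<rho> (Yop n j) = Yop n j"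
proof (rule op_alg_eq_test[OF op_aut_in[OF r op_alg_Y[OF j]] op_alg_Y[OF j]])
  have fixM: "\<rho> (Mop n \<alpha> vac \<circ> vac_proj n) = Mop n \<alpha> vac \<circ> vac_proj n" for \<alpha>
    using op_aut_comp[OF r op_alg_Mop vac_proj_in_op_alg] Mop_fix[OF r fx] rE by simp
  fix \<alpha> \<gamma> assume a: "adm n \<alpha>"
  let ?M = "Mop n \<alpha> vac \<circ> (vac_proj n :: 'k op)"
  have "\<rho> (Yop n j) \<circ> ?M = \<rho> (Yop n j \<circ> ?M)"
    using op_aut_comp[OF r op_alg_Y[OF j] op_alg_comp[OF op_alg_Mop vac_proj_in_op_alg]] fixM by simp
  also have "\<dots> = Yop n j \<circ> ?M"
    by (cases "0 < \<alpha> j") (simp_all only: y_xmono_vac_proj[OF a j] fixM op_aut_zero[OF r] if_True if_False)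
  finally have eq: "\<rho> (Yop n j) \<circ> ?M = Yop n j \<circ> ?M" .
  have "?M (delta vac) = delta \<alpha>" using a by (auto simp: fun_eq_iff xmono_vac delta_def)
  then show "\<rho> (Yop n j) (delta \<alpha>) \<gamma> = Yop n j (delta \<alpha>) \<gamma>"
    using fun_cong[OF fun_cong[OF eq, of "delta vac"], of \<gamma>] by simp
qed

text \<open>Mirror image: an automorphism fixing all \<open>y\<^sub>i\<close> and \<open>E\<close> fixes every \<open>E y\<^sup>\<beta>\<close>, so
  \<open>E y\<^sup>\<beta> \<rho>(x\<^sub>j) = E y\<^sup>\<beta> x\<^sub>j\<close>, and \<open>E y\<^sup>\<beta>\<close> reads off the \<open>\<beta>\<close>-coordinate.\<close>

lemma op_aut_fix_y_vac_fix_x: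
  fixes \<rho> :: "('k::field) op \<Rightarrow> 'k op"
  assumes r: "op_aut n \<rho>" and fy: "\<And>i. i \<in> {1..n} \<Longrightarrow> \<rho> (Yop n i) = Yop n i"
    and rE: "\<rho> (vac_proj n) = vac_proj n" and j: "j \<in> {1..n}"
  shows "\<rho> (Xop n j) = Xop n j"
proof (rule op_alg_eq_test[OF op_aut_in[OF r op_alg_X[OF j]] op_alg_X[OF j]])
  have fixN: "\<rho> (vac_proj n \<circ> Mop n vac \<beta>) = vac_proj n \<circ> Mop n vac \<beta>" for \<beta>
    using op_aut_comp[OF r vac_proj_in_op_alg op_alg_Mop] MopY_fix[OF r fy] rE by simp
  fix \<gamma> \<beta>
  show "\<rho> (Xop n j) (delta \<gamma>) \<beta> = Xop n j (delta \<gamma>) \<beta>"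
  proof (cases "adm n \<beta>")
    case False
    then show ?thesis using op_alg_nadm[OF op_aut_in[OF r op_alg_X[OF j]]] op_alg_nadm[OF op_alg_X[OF j]] by simp
  next
    case b: True
    let ?N = "vac_proj n \<circ> (Mop n vac \<beta> :: 'k op)"
    have "?N \<circ> \<rho> (Xop n j) = \<rho> (?N \<circ> Xop n j)"
      using op_aut_comp[OF r op_alg_comp[OF vac_proj_in_op_alg op_alg_Mop] op_alg_X[OF j]] fixN by simp
    also have "\<dots> = ?N \<circ> Xop n j"
      by (cases "0 < \<beta> j") (simp_all only: vac_proj_ymono_x[OF b j] fixN op_aut_zero[OF r] if_True if_False)
    finally have eq: "?N \<circ> \<rho> (Xop n j) = ?N \<circ> Xop n j" .
    have "?N w vac = w \<beta>" for w :: "'k vec" using b by (simp add: vac_proj_formula ymono_formula)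
    then show ?thesis using fun_cong[OF fun_cong[OF eq, of "delta \<gamma>"], of vac] by simp
  qed
qed

lemma op_aut_bij_facts:
  assumes "op_aut n \<tau>"
  shows "\<And>a. a \<in> op_alg n \<Longrightarrow> \<tau> (inv_into (op_alg n) \<tau> a) = a"
    and "\<And>a. a \<in> op_alg n \<Longrightarrow> inv_into (op_alg n) \<tau> (\<tau> a) = a"
proof -
  have b: "bij_betw \<tau> (op_alg n) (op_alg n)" using assms unfolding op_aut_def by auto
  show "\<And>a. a \<in> op_alg n \<Longrightarrow> \<tau> (inv_into (op_alg n) \<tau> a) = a"
    using b by (metis bij_betw_def f_inv_into_f)
  show "\<And>a. a \<in> op_alg n \<Longrightarrow> inv_into (op_alg n) \<tau> (\<tau> a) = a"
    using b by (metis bij_betw_def inv_into_f_f)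
qed

lemma op_aut_relative:
  fixes \<sigma> \<tau> :: "('k::field) op \<Rightarrow> 'k op"
  assumes s: "op_aut n \<sigma>" and t: "op_aut n \<tau>"
  shows "op_aut n (inv_into (op_alg n) \<tau> \<circ> \<sigma>)"
    and "a \<in> op_alg n \<Longrightarrow> (inv_into (op_alg n) \<tau> \<circ> \<sigma>) a = a \<longleftrightarrow> \<sigma> a = \<tau> a"
proof -
  show "op_aut n (inv_into (op_alg n) \<tau> \<circ> \<sigma>)" by (rule op_aut_compose[OF op_aut_inv[OF t] s])
  assume a: "a \<in> op_alg n"
  show "(inv_into (op_alg n) \<tau> \<circ> \<sigma>) a = a \<longleftrightarrow> \<sigma> a = \<tau> a"
    using op_aut_bij_facts[OF t] op_aut_in[OF s a] a by (metis comp_apply)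
qed

lemma op_aut_relative_inverse:
  fixes \<sigma> \<tau> :: "('k::field) op \<Rightarrow> 'k op"
  assumes s: "op_aut n \<sigma>" and t: "op_aut n \<tau>" and a: "a \<in> op_alg n"
  shows "(inv_into (op_alg n) \<tau> \<circ> \<sigma>) ((inv_into (op_alg n) \<sigma> \<circ> \<tau>) a) = a"
  using op_aut_bij_facts(1)[OF s op_aut_in[OF t a]] op_aut_bij_facts(2)[OF t a] by simp

lemma op_aut_agree_all:
  fixes \<sigma> \<tau> :: "('k::field) op \<Rightarrow> 'k op"
  assumes s: "op_aut n \<sigma>" and t: "op_aut n \<tau>"
    and X: "\<And>i. i \<in> {1..n} \<Longrightarrow> \<sigma> (Xop n i) = \<tau> (Xop n i)"
    and Y: "\<And>i. i \<in> {1..n} \<Longrightarrow> \<sigma> (Yop n i) = \<tau> (Yop n i)"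
    and a: "a \<in> op_alg n"
  shows "\<sigma> a = \<tau> a"
proof -
  note rel = op_aut_relative[OF s t]
  have "(inv_into (op_alg n) \<tau> \<circ> \<sigma>) a = a"
    by (rule op_aut_fix_all[OF rel(1) _ _ a]) (use X Y rel(2) op_alg_X op_alg_Y in blast)+
  then show ?thesis using rel(2)[OF a] by blast
qed

text \<open>Automorphisms agreeing on the \<open>x\<^sub>i\<close> agree on the \<open>y\<^sub>i\<close>, and conversely: apply the results
  on fixed generators to \<open>\<tau>\<^sup>-\<^sup>1 \<sigma>\<close> and its inverse \<open>\<sigma>\<^sup>-\<^sup>1 \<tau>\<close>.\<close>

lemma op_aut_agree_x_agree_y:
  fixes \<sigma> \<tau> :: "('k::field) op \<Rightarrow> 'k op"
  assumes s: "op_aut n \<sigma>" and t: "op_aut n \<tau>"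
    and X: "\<And>i. i \<in> {1..n} \<Longrightarrow> \<sigma> (Xop n i) = \<tau> (Xop n i)" and j: "j \<in> {1..n}"
  shows "\<sigma> (Yop n j) = \<tau> (Yop n j)"
proof -
  define \<rho> where "\<rho> = inv_into (op_alg n) \<tau> \<circ> \<sigma>"
  define \<rho>' where "\<rho>' = inv_into (op_alg n) \<sigma> \<circ> \<tau>"
  have r: "op_aut n \<rho>" and r': "op_aut n \<rho>'"
    and agree: "\<And>a. a \<in> op_alg n \<Longrightarrow> \<rho> a = a \<longleftrightarrow> \<sigma> a = \<tau> a"
    and agree': "\<And>a. a \<in> op_alg n \<Longrightarrow> \<rho>' a = a \<longleftrightarrow> \<tau> a = \<sigma> a"
    unfolding \<rho>_def \<rho>'_def using op_aut_relative[OF s t] op_aut_relative[OF t s] by blast+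
  have fx: "\<rho> (Xop n i) = Xop n i" and fx': "\<rho>' (Xop n i) = Xop n i" if "i \<in> {1..n}" for i
    using X[OF that] agree agree' op_alg_X[OF that] by metis+
  have "\<rho> (\<rho>' (vac_proj n)) = vac_proj n"
    unfolding \<rho>_def \<rho>'_def by (rule op_aut_relative_inverse[OF s t vac_proj_in_op_alg])
  then have "\<rho> (vac_proj n) = vac_proj n" by (rule op_aut_fix_x_vac_proj[OF r r' _ fx fx'])
  then have "\<rho> (Yop n j) = Yop n j" using op_aut_fix_x_vac_fix_y[OF r fx] j by blast
  then show ?thesis using agree[OF op_alg_Y[OF j]] by blast
qed

lemma op_aut_agree_y_agree_x:
  fixes \<sigma> \<tau> :: "('k::field) op \<Rightarrow> 'k op"
  assumes s: "op_aut n \<sigma>" and t: "op_aut n \<tau>"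
    and Y: "\<And>i. i \<in> {1..n} \<Longrightarrow> \<sigma> (Yop n i) = \<tau> (Yop n i)" and j: "j \<in> {1..n}"
  shows "\<sigma> (Xop n j) = \<tau> (Xop n j)"
proof -
  define \<rho> where "\<rho> = inv_into (op_alg n) \<tau> \<circ> \<sigma>"
  define \<rho>' where "\<rho>' = inv_into (op_alg n) \<sigma> \<circ> \<tau>"
  have r: "op_aut n \<rho>" and r': "op_aut n \<rho>'"
    and agree: "\<And>a. a \<in> op_alg n \<Longrightarrow> \<rho> a = a \<longleftrightarrow> \<sigma> a = \<tau> a"
    and agree': "\<And>a. a \<in> op_alg n \<Longrightarrow> \<rho>' a = a \<longleftrightarrow> \<tau> a = \<sigma> a"
    unfolding \<rho>_def \<rho>'_def using op_aut_relative[OF s t] op_aut_relative[OF t s] by blast+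
  have fy: "\<rho> (Yop n i) = Yop n i" and fy': "\<rho>' (Yop n i) = Yop n i" if "i \<in> {1..n}" for i
    using Y[OF that] agree agree' op_alg_Y[OF that] by metis+
  have "\<rho> (\<rho>' (vac_proj n)) = vac_proj n"
    unfolding \<rho>_def \<rho>'_def by (rule op_aut_relative_inverse[OF s t vac_proj_in_op_alg])
  then have "\<rho> (vac_proj n) = vac_proj n" by (rule op_aut_fix_y_vac_proj[OF r r' _ fy fy'])
  then have "\<rho> (Xop n j) = Xop n j" using op_aut_fix_y_vac_fix_x[OF r fy] j by blast
  then show ?thesis using agree[OF op_alg_X[OF j]] by blast
qed

lemma Sn_aut_eq_iff:
  assumes s: "Sn_aut n \<sigma>" and t: "Sn_aut n \<tau>" and A: "A \<in> Sn n"
  shows "\<sigma> A = \<tau> A \<longleftrightarrow> Sn_conj n \<sigma> (rep_cls n A) = Sn_conj n \<tau> (rep_cls n A)"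
proof -
  have "\<sigma> A \<in> Sn n" "\<tau> A \<in> Sn n" using s t A unfolding Sn_aut_def bij_betw_def by auto
  moreover have "Sn_conj n \<rho> (rep_cls n A) = rep_cls n (\<rho> A)" for \<rho>
    unfolding Sn_conj_def by (simp add: cls_of_rep[OF A])
  ultimately show ?thesis using inj_onD[OF rep_cls_inj] by metis
qed

lemma Sn_aut_agree_iff:
  assumes "Sn_aut n \<sigma>" and "Sn_aut n \<tau>"
  shows "(\<forall>A\<in>Sn n. \<sigma> A = \<tau> A) \<longleftrightarrow> (\<forall>a\<in>op_alg n. Sn_conj n \<sigma> a = Sn_conj n \<tau> a)"
  unfolding rep_cls_img[symmetric] using Sn_aut_eq_iff[OF assms] by auto

theorem theorem3p6:
  fixes \<sigma> \<tau> :: "('k::field_char_0) ncpoly set \<Rightarrow> 'k ncpoly set"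
    and n :: nat
  assumes "n \<ge> 1" and "Sn_aut n \<sigma>" and "Sn_aut n \<tau>"
  shows "((\<forall>A\<in>Sn n. \<sigma> A = \<tau> A) \<longleftrightarrow> (\<forall>i\<in>{1..n}. \<sigma> (Sn_x n i) = \<tau> (Sn_x n i)))
       \<and> ((\<forall>A\<in>Sn n. \<sigma> A = \<tau> A) \<longleftrightarrow> (\<forall>i\<in>{1..n}. \<sigma> (Sn_y n i) = \<tau> (Sn_y n i)))"
proof -
  let ?s = "Sn_conj n \<sigma>" and ?t = "Sn_conj n \<tau>"
  have s: "op_aut n ?s" and t: "op_aut n ?t" using assms(2,3) Sn_conj_op_aut by blast+
  have xs: "\<sigma> (Sn_x n i) = \<tau> (Sn_x n i) \<longleftrightarrow> ?s (Xop n i) = ?t (Xop n i)" if "i \<in> {1..n}" for i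
    using Sn_aut_eq_iff[OF assms(2,3) Sn_x_in[OF that]] rep_cls_x[OF that, where 'a='k] by simp
  have ys: "\<sigma> (Sn_y n i) = \<tau> (Sn_y n i) \<longleftrightarrow> ?s (Yop n i) = ?t (Yop n i)" if "i \<in> {1..n}" for i
    using Sn_aut_eq_iff[OF assms(2,3) Sn_y_in[OF that]] rep_cls_y[OF that, where 'a='k] by simp
  have "(\<forall>a\<in>op_alg n. ?s a = ?t a) \<longleftrightarrow> (\<forall>i\<in>{1..n}. ?s (Xop n i) = ?t (Xop n i))"
    using op_aut_agree_all[OF s t] op_aut_agree_x_agree_y[OF s t] op_alg_X by blast
  moreover have "(\<forall>a\<in>op_alg n. ?s a = ?t a) \<longleftrightarrow> (\<forall>i\<in>{1..n}. ?s (Yop n i) = ?t (Yop n i))"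
    using op_aut_agree_all[OF s t] op_aut_agree_y_agree_x[OF s t] op_alg_Y by blast
  ultimately show ?thesis using Sn_aut_agree_iff[OF assms(2,3)] xs ys by auto
qed

end
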